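(* Let $\{(\mathcal{A}_{i,\mathcal{F}},\mathcal{A}_{i,\mathcal{B}})\}_{i\in\mathcal{I}}$ be a combinatorially free-Boolean independent (with amalgamation over $B$) family of pairs of $B$-faces in a $B$-valued probability space $(\mathcal{A},\mathbb{E})$. Let $\chi:[n]\to\{\mathcal{F},\mathcal{B}\}$, $\pi\in INC(\chi)$, $\omega:[n]\to\mathcal{I}$, and $a_k\in\mathcal{A}_{\omega(k),\chi(k)}$ for $k=1,\dots,n$. If $\omega$ is not constant on some block of $\pi$, then $\kappa_{\chi,\pi}(a_1,\dots,a_n)=0$.
   Context: $B$ is a unital complex algebra; a $B$-valued probability space is $(\mathcal{A},\mathbb{E})$ with $\mathcal{A}\supseteq B$ a unital algebra and $\mathbb{E}:\mathcal{A}\to B$ linear with $\mathbb{E}(b_1ab_2)=b_1\mathbb{E}(a)b_2$. A pair of $B$-faces is a pair of (not necessarily unital) subalgebras that are $B$-$B$-bimodules. For $\chi:[n]\to\{\mathcal{F},\mathcal{B}\}$, $INC(\chi)$ is the set of noncrossing partitions $\pi$ of $[n]$ such that $v_1<w<v_2$, $v_1\sim_\pi v_2$, $\chi(w)=\mathcal{B}$ imply $w\sim_\pi v_1$; $\mu_{INC}$ is its Möbius function for reverse refinement, $1_n$ the one-block partition. $\Phi_\sigma(a_1,\dots,a_n)$ is the nested expectation: $\Phi_{1_n}=\mathbb{E}(a_1\cdots a_n)$ and for an interval block $W=\{l+1,\dots,l+s\}$ of $\sigma$, $\Phi_\sigma(a_1,\dots,a_n)=\Phi_{\sigma\setminus\{W\}}(a_1,\dots,a_l,\mathbb{E}(a_{l+1}\cdots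 a_{l+s})a_{l+s+1},\dots,a_n)$. Set $\kappa_{\chi,\pi}(a_1,\dots,a_n)=\sum_{\sigma\in INC(\chi),\sigma\le\pi}\mu_{INC}(\sigma,\pi)\Phi_\sigma(a_1,\dots,a_n)$. The family is combinatorially free-Boolean independent with amalgamation over $B$ if $\kappa_{\chi,1_n}(a_1,\dots,a_n)=0$ whenever $\omega:[n]\to\mathcal{I}$ is non-constant, $\chi$ arbitrary, and $a_k\in\mathcal{A}_{\omega(k),\chi(k)}$ for all $k$. *)

theory Defs
  imports Complex_Main "HOL-Library.Disjoint_Sets"
begin

text \<open>The ambient unital algebra \<open>\<A>\<close> is the type 'a (a ring with 1); its complex
  algebra structure is given by a ring homomorphism sc from the complex numbers into the
  centre of 'a (scalar multiplication c.x = sc c * x).\<close>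

definition complex_structure :: "(complex \<Rightarrow> 'a::ring_1) \<Rightarrow> bool" where
  "complex_structure sc \<longleftrightarrow>
     sc 1 = 1 \<and> (\<forall>c d. sc (c + d) = sc c + sc d) \<and> (\<forall>c d. sc (c * d) = sc c * sc d)
     \<and> (\<forall>c x. sc c * x = x * sc c)"

definition unital_subalgebra :: "(complex \<Rightarrow> 'a::ring_1) \<Rightarrow> 'a set \<Rightarrow> bool" where
  "unital_subalgebra sc S \<longleftrightarrow>
     1 \<in> S \<and> 0 \<in> S \<and> (\<forall>x\<in>S. \<forall>y\<in>S. x + y \<in> S \<and> x * y \<in> S)
     \<and> (\<forall>c. \<forall>x\<in>S. sc c * x \<in> S)"

definition B_prob_space :: "(complex \<Rightarrow> 'a::ring_1) \<Rightarrow> 'a set \<Rightarrow> ('a \<Rightarrow> 'a) \<Rightarrow> bool" where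
  "B_prob_space sc Bs E \<longleftrightarrow>
     complex_structure sc \<and> unital_subalgebra sc Bs
     \<and> (\<forall>x. E x \<in> Bs)
     \<and> (\<forall>x y. E (x + y) = E x + E y) \<and> (\<forall>c x. E (sc c * x) = sc c * E x)
     \<and> (\<forall>b1\<in>Bs. \<forall>b2\<in>Bs. \<forall>x. E (b1 * x * b2) = b1 * E x * b2)"

definition B_face :: "(complex \<Rightarrow> 'a::ring_1) \<Rightarrow> 'a set \<Rightarrow> 'a set \<Rightarrow> bool" where
  "B_face sc Bs S \<longleftrightarrow>
     0 \<in> S \<and> (\<forall>x\<in>S. \<forall>y\<in>S. x + y \<in> S \<and> x * y \<in> S) \<and> (\<forall>c. \<forall>x\<in>S. sc c * x \<in> S)
     \<and> (\<forall>b\<in>Bs. \<forall>x\<in>S. b * x \<in> S \<and> x * b \<in> S)"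

datatype side = FaceF | FaceB

definition same_block :: "nat set set \<Rightarrow> nat \<Rightarrow> nat \<Rightarrow> bool" where
  "same_block \<pi> x y \<longleftrightarrow> (\<exists>V\<in>\<pi>. x \<in> V \<and> y \<in> V)"

definition noncrossing :: "nat \<Rightarrow> nat set set \<Rightarrow> bool" where
  "noncrossing n \<pi> \<longleftrightarrow> partition_on {1..n} \<pi> \<and>
     (\<forall>V\<in>\<pi>. \<forall>W\<in>\<pi>. \<forall>a b c d. a < b \<and> b < c \<and> c < d \<and> a \<in> V \<and> c \<in> V \<and> b \<in> W \<and> d \<in> W
        \<longrightarrow> V = W)"

definition INC :: "nat \<Rightarrow> (nat \<Rightarrow> side) \<Rightarrow> nat set set set" where
  "INC n \<chi> = {\<pi>. noncrossing n \<pi> \<and>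
     (\<forall>v1 w v2. v1 < w \<and> w < v2 \<and> same_block \<pi> v1 v2 \<and> \<chi> w = FaceB \<longrightarrow> same_block \<pi> w v1)}"

definition one_part :: "nat \<Rightarrow> nat set set" where
  "one_part n = {{1..n}}"

definition refines :: "nat set set \<Rightarrow> nat set set \<Rightarrow> bool" where
  "refines \<sigma> \<pi> \<longleftrightarrow> (\<forall>V\<in>\<sigma>. \<exists>W\<in>\<pi>. V \<subseteq> W)"

text \<open>The recursion is run with a fuel argument; fuel card S always
  suffices for a finite poset S, since every recursive call descends along a strict chain in S.\<close>
fun mob_fuel :: "nat \<Rightarrow> 'p set \<Rightarrow> ('p \<Rightarrow> 'p \<Rightarrow> bool) \<Rightarrow> 'p \<Rightarrow> 'p \<Rightarrow> int" where
  "mob_fuel 0 S le x y = (if x = y then 1 else 0)"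
| "mob_fuel (Suc k) S le x y =
     (if x = y then 1
      else if le x y then - (\<Sum>z\<in>{z\<in>S. le x z \<and> le z y \<and> z \<noteq> y}. mob_fuel k S le x z)
      else 0)"

definition mobius :: "'p set \<Rightarrow> ('p \<Rightarrow> 'p \<Rightarrow> bool) \<Rightarrow> 'p \<Rightarrow> 'p \<Rightarrow> int" where
  "mobius S le x y = mob_fuel (card S) S le x y"

definition mu_INC :: "nat \<Rightarrow> (nat \<Rightarrow> side) \<Rightarrow> nat set set \<Rightarrow> nat set set \<Rightarrow> int" where
  "mu_INC n \<chi> \<sigma> \<pi> = mobius (INC n \<chi>) refines \<sigma> \<pi>"

text \<open>Elements a_1..a_n are given as a list xs with a_k = xs ! (k-1).
  nested_rel E \<sigma> xs v: v is obtained as Phi_sigma(xs) by the recursive description: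
  Phi_{1_n} = E(a_1...a_n); and for an interval block W = {l+1..l+s} of \<sigma> (with l+s < n)
  Phi_\<sigma>(a) = Phi_{\<sigma> \ W}(a_1,..,a_l, E(a_{l+1}...a_{l+s}) a_{l+s+1}, ..., a_n), where the
  remaining blocks are relabelled onto [n-s].\<close>
definition shift_down :: "nat \<Rightarrow> nat \<Rightarrow> nat \<Rightarrow> nat" where
  "shift_down l s j = (if j \<le> l then j else j - s)"

inductive nested_rel :: "('a::ring_1 \<Rightarrow> 'a) \<Rightarrow> nat set set \<Rightarrow> 'a list \<Rightarrow> 'a \<Rightarrow> bool"
  for E where
  full: "xs \<noteq> [] \<Longrightarrow> nested_rel E {{1..length xs}} xs (E (prod_list xs))"
| step: "\<lbrakk> {l+1..l+s} \<in> \<sigma>; 1 \<le> s; l + s < length xs;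
          nested_rel E ((\<lambda>V. shift_down l s ` V) ` (\<sigma> - {{l+1..l+s}}))
            (take l xs @ [E (prod_list (take s (drop l xs))) * xs ! (l + s)] @ drop (l + s + 1) xs) v \<rbrakk>
        \<Longrightarrow> nested_rel E \<sigma> xs v"

definition Phi :: "('a::ring_1 \<Rightarrow> 'a) \<Rightarrow> nat set set \<Rightarrow> 'a list \<Rightarrow> 'a" where
  "Phi E \<sigma> xs = (THE v. nested_rel E \<sigma> xs v)"

definition kappa :: "('a::ring_1 \<Rightarrow> 'a) \<Rightarrow> (nat \<Rightarrow> side) \<Rightarrow> nat set set \<Rightarrow> 'a list \<Rightarrow> 'a" where
  "kappa E \<chi> \<pi> xs =
     (\<Sum>\<sigma>\<in>{\<sigma>\<in>INC (length xs) \<chi>. refines \<sigma> \<pi>}.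
        of_int (mu_INC (length xs) \<chi> \<sigma> \<pi>) * Phi E \<sigma> xs)"

definition comb_free_boolean_indep ::
  "('a::ring_1 \<Rightarrow> 'a) \<Rightarrow> ('i \<Rightarrow> side \<Rightarrow> 'a set) \<Rightarrow> bool" where
  "comb_free_boolean_indep E AA \<longleftrightarrow>
     (\<forall>(xs::'a list) (\<chi>::nat \<Rightarrow> side) (\<omega>::nat \<Rightarrow> 'i).
        (\<exists>j\<in>{1..length xs}. \<exists>k\<in>{1..length xs}. \<omega> j \<noteq> \<omega> k)
        \<and> (\<forall>k\<in>{1..length xs}. xs ! (k - 1) \<in> AA (\<omega> k) (\<chi> k))
        \<longrightarrow> kappa E \<chi> (one_part (length xs)) xs = 0)"

end

theory Submission
  imports Defs
begin

text \<open>
  If \<open>\<pi>\<close> has an interval block \<open>W = {l+1..l+s}\<close>, every \<open>\<sigma> \<le> \<pi>\<close> splits into a part inside \<open>W\<close> and a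
  part outside, and \<open>\<Phi>\<^sub>\<sigma>\<close> can be evaluated in two stages: first inside \<open>W\<close>, then the rest, with the
  inner value absorbed into the element following \<open>W\<close>. The same splitting identifies the interval
  below \<open>\<pi>\<close> in \<open>INC(\<chi>)\<close> with a product of two such intervals, so the Moebius function factors, and since
  \<open>\<Phi>\<close> is additive in each argument,
  \<open>\<kappa>\<^sub>\<pi>(a) = \<kappa>\<^sub>\<pi>\<^sub>'(a\<^sub>1, \<dots>, a\<^sub>l, b a\<^sub>l\<^sub>+\<^sub>s\<^sub>+\<^sub>1, \<dots>, a\<^sub>n)\<close>, where \<open>\<pi>'\<close> is \<open>\<pi>\<close> with \<open>W\<close> removed and
  \<open>b\<close> is the full cumulant of the entries indexed by \<open>W\<close>.
  A noncrossing partition other than \<open>1\<^sub>n\<close> always has an interval block avoiding \<open>n\<close>. Now induct on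
  \<open>n\<close>: if the block on which \<open>\<omega>\<close> is not constant is \<open>W\<close>, the inner cumulant vanishes by independence;
  otherwise that block survives in \<open>\<pi>'\<close>, and the new element still lies in the right face because faces
  are \<open>B\<close>-bimodules and cumulants take values in \<open>B\<close>.
  That \<open>\<Phi>\<close> is well defined at all rests on contractions of disjoint interval blocks commuting, which
  uses \<open>E(E(x) y) = E(x) E(y)\<close>.
\<close>

section \<open>Partitions described by their blocks\<close>

lemma same_block_sym: "same_block P x y \<Longrightarrow> same_block P y x"
  unfolding same_block_def by blast

lemma same_block_Un: "same_block (P \<union> Q) x y \<longleftrightarrow> same_block P x y \<or> same_block Q x y"
  unfolding same_block_def by blast

lemma partition_on_block_eq:
  "partition_on A P \<Longrightarrow> V \<in> P \<Longrightarrow> W \<in> P \<Longrightarrow> x \<in> V \<Longrightarrow> x \<in> W \<Longrightarrow> V = W"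
  unfolding partition_on_def by (meson disjointD disjoint_iff)

lemma partition_on_block_subset: "partition_on A P \<Longrightarrow> V \<in> P \<Longrightarrow> V \<subseteq> A"
  unfolding partition_on_def by blast

lemma partition_on_covers: "partition_on A P \<Longrightarrow> x \<in> A \<Longrightarrow> \<exists>V\<in>P. x \<in> V"
  unfolding partition_on_def by blast

lemma partition_on_block_nonempty: "partition_on A P \<Longrightarrow> V \<in> P \<Longrightarrow> V \<noteq> {}"
  unfolding partition_on_def by blast

lemma same_block_in_carrier: "partition_on A P \<Longrightarrow> same_block P x y \<Longrightarrow> x \<in> A \<and> y \<in> A"
  unfolding same_block_def partition_on_def by blast

lemma same_block_iff_in_block:
  "partition_on A P \<Longrightarrow> V \<in> P \<Longrightarrow> x \<in> V \<Longrightarrow> same_block P x y \<longleftrightarrow> y \<in> V"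
  unfolding same_block_def using partition_on_block_eq by metis

lemma same_block_trans:
  "partition_on A P \<Longrightarrow> same_block P x y \<Longrightarrow> same_block P y z \<Longrightarrow> same_block P x z"
  unfolding same_block_def using partition_on_block_eq by metis

lemma partition_on_eqI:
  assumes "partition_on A P" "partition_on A Q"
    and "\<And>x y. x \<in> A \<Longrightarrow> y \<in> A \<Longrightarrow> same_block P x y \<longleftrightarrow> same_block Q x y"
  shows "P = Q"
proof -
  have "{(x, y). same_block P x y} = {(x, y). same_block Q x y}"
    using assms(3) same_block_in_carrier[OF assms(1)] same_block_in_carrier[OF assms(2)] by blast
  then show ?thesis
    using partition_on_eq_quotient[OF assms(1)] partition_on_eq_quotient[OF assms(2)]
    unfolding same_block_def by metis
qed

lemma partition_on_image:
  assumes "partition_on A P" "inj_on f A"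
  shows "partition_on (f ` A) ((\<lambda>V. f ` V) ` P)"
proof -
  have "(\<lambda>V. f ` V) ` P - {{}} = (\<lambda>V. f ` V) ` P"
    using assms(1) unfolding partition_on_def by auto
  then show ?thesis using partition_on_inj_image[OF assms] by simp
qed

lemma same_block_image_iff:
  assumes "partition_on A P" "inj_on f A" "x \<in> A" "y \<in> A"
  shows "same_block ((\<lambda>V. f ` V) ` P) (f x) (f y) \<longleftrightarrow> same_block P x y"
proof
  assume "same_block ((\<lambda>V. f ` V) ` P) (f x) (f y)"
  then obtain V x' y' where V: "V \<in> P" "x' \<in> V" "y' \<in> V" "f x = f x'" "f y = f y'"
    unfolding same_block_def by auto
  moreover have "x' \<in> A" "y' \<in> A"
    using V partition_on_block_subset[OF assms(1)] by blast+
  ultimately have "x = x'" "y = y'"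
    using inj_onD[OF assms(2) _ assms(3)] inj_onD[OF assms(2) _ assms(4)] by auto
  then show "same_block P x y" using V unfolding same_block_def by blast
qed (auto simp: same_block_def)

lemma partition_on_subset: "partition_on A P \<Longrightarrow> Q \<subseteq> P \<Longrightarrow> partition_on (\<Union>Q) Q"
  unfolding partition_on_def by (meson pairwise_subset subset_iff)

lemma partition_on_Un:
  assumes P: "partition_on A P" and Q: "partition_on B Q" and AB: "A \<inter> B = {}"
  shows "partition_on (A \<union> B) (P \<union> Q)"
proof (rule partition_onI)
  show "\<Union>(P \<union> Q) = A \<union> B" "{} \<notin> P \<union> Q"
    using P Q unfolding partition_on_def by auto
  fix p q assume "p \<in> P \<union> Q" "q \<in> P \<union> Q" "p \<noteq> q"
  then show "disjnt p q"
  proof (elim UnE)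
    assume "p \<in> P" "q \<in> P"
    then show ?thesis using \<open>p \<noteq> q\<close> partition_onD2[OF P] by (meson pairwiseD)
  next
    assume "p \<in> Q" "q \<in> Q"
    then show ?thesis using \<open>p \<noteq> q\<close> partition_onD2[OF Q] by (meson pairwiseD)
  next
    assume "p \<in> P" "q \<in> Q"
    then have "p \<subseteq> A" "q \<subseteq> B" using P Q partition_on_block_subset by blast+
    then show ?thesis using AB unfolding disjnt_def by blast
  next
    assume "p \<in> Q" "q \<in> P"
    then have "p \<subseteq> B" "q \<subseteq> A" using P Q partition_on_block_subset by blast+
    then show ?thesis using AB unfolding disjnt_def by blast
  qed
qed

lemma refines_iff_same_block:
  assumes "partition_on A S" "partition_on A P"
  shows "refines S P \<longleftrightarrow> (\<forall>x y. same_block S x y \<longrightarrow> same_block P x y)"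
proof
  assume r: "refines S P"
  show "\<forall>x y. same_block S x y \<longrightarrow> same_block P x y"
  proof (intro allI impI)
    fix x y assume "same_block S x y"
    then obtain V where V: "V \<in> S" "x \<in> V" "y \<in> V" unfolding same_block_def by blast
    then obtain W where "W \<in> P" "V \<subseteq> W" using r unfolding Defs.refines_def by blast
    then show "same_block P x y" using V unfolding same_block_def by blast
  qed
next
  assume h: "\<forall>x y. same_block S x y \<longrightarrow> same_block P x y"
  show "refines S P" unfolding Defs.refines_def
  proof
    fix V assume V: "V \<in> S"
    then obtain x where x: "x \<in> V" using partition_on_block_nonempty[OF assms(1)] by blast
    then obtain W where W: "W \<in> P" "x \<in> W"
      using V partition_on_block_subset[OF assms(1)] partition_on_covers[OF assms(2)] by blast
    have "y \<in> W" if "y \<in> V" for y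
    proof -
      have "same_block S x y" using V x that unfolding same_block_def by blast
      then show ?thesis using h same_block_iff_in_block[OF assms(2) W] by blast
    qed
    then show "\<exists>W\<in>P. V \<subseteq> W" using W by blast
  qed
qed

section \<open>Noncrossing partitions and the set \<open>INC\<close>\<close>

lemma noncrossing_iff_same_block:
  "noncrossing n P \<longleftrightarrow> partition_on {1..n} P \<and>
     (\<forall>a b c d. a < b \<and> b < c \<and> c < d \<and> same_block P a c \<and> same_block P b d \<longrightarrow> same_block P a b)"
proof (cases "partition_on {1..n} P")
  case P: True
  have "(\<forall>V\<in>P. \<forall>W\<in>P. \<forall>a b c d. a < b \<and> b < c \<and> c < d \<and> a \<in> V \<and> c \<in> V \<and> b \<in> W \<and> d \<in> W
          \<longrightarrow> V = W) \<longleftrightarrow>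
        (\<forall>a b c d. a < b \<and> b < c \<and> c < d \<and> same_block P a c \<and> same_block P b d \<longrightarrow> same_block P a b)"
  proof (intro iffI allI ballI impI)
    fix a b c d
    assume nc: "\<forall>V\<in>P. \<forall>W\<in>P. \<forall>a b c d. a < b \<and> b < c \<and> c < d \<and> a \<in> V \<and> c \<in> V \<and> b \<in> W
          \<and> d \<in> W \<longrightarrow> V = W"
      and h: "a < b \<and> b < c \<and> c < d \<and> same_block P a c \<and> same_block P b d"
    from h obtain V W where VW: "V \<in> P" "a \<in> V" "c \<in> V" "W \<in> P" "b \<in> W" "d \<in> W"
      unfolding same_block_def by blast
    have "V = W" using nc[rule_format, OF VW(1) VW(4), of a b c d] h VW by blast
    then show "same_block P a b" using VW unfolding same_block_def by blast
  next
    fix V W a b c d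
    assume nc: "\<forall>a b c d. a < b \<and> b < c \<and> c < d \<and> same_block P a c \<and> same_block P b d
          \<longrightarrow> same_block P a b"
      and VW: "V \<in> P" "W \<in> P" and h: "a < b \<and> b < c \<and> c < d \<and> a \<in> V \<and> c \<in> V \<and> b \<in> W \<and> d \<in> W"
    have "same_block P a c" "same_block P b d" using VW h unfolding same_block_def by blast+
    then have "same_block P a b" using nc h by blast
    then have "b \<in> V" using same_block_iff_in_block[OF P VW(1)] h by blast
    then show "V = W" using partition_on_block_eq[OF P VW] h by blast
  qed
  with P show ?thesis unfolding noncrossing_def by (simp only: simp_thms)
qed (simp add: noncrossing_def)

lemma noncrossing_partition_on: "noncrossing n P \<Longrightarrow> partition_on {1..n} P"
  unfolding noncrossing_def by blast

lemma noncrossingD: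
  "noncrossing n P \<Longrightarrow> a < b \<Longrightarrow> b < c \<Longrightarrow> c < d \<Longrightarrow> same_block P a c \<Longrightarrow> same_block P b d
   \<Longrightarrow> same_block P a b"
  unfolding noncrossing_iff_same_block by blast

lemma noncrossingI:
  "partition_on {1..n} P \<Longrightarrow>
   (\<And>a b c d. a < b \<Longrightarrow> b < c \<Longrightarrow> c < d \<Longrightarrow> same_block P a c \<Longrightarrow> same_block P b d
      \<Longrightarrow> same_block P a b) \<Longrightarrow> noncrossing n P"
  unfolding noncrossing_iff_same_block by blast

definition INC_cond :: "(nat \<Rightarrow> side) \<Rightarrow> nat set set \<Rightarrow> bool" where
  "INC_cond \<chi> P \<longleftrightarrow>
     (\<forall>v1 w v2. v1 < w \<and> w < v2 \<and> same_block P v1 v2 \<and> \<chi> w = FaceB \<longrightarrow> same_block P w v1)"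

lemma INC_iff: "P \<in> INC n \<chi> \<longleftrightarrow> noncrossing n P \<and> INC_cond \<chi> P"
  unfolding INC_def INC_cond_def by simp

lemma INC_condD:
  "INC_cond \<chi> P \<Longrightarrow> v1 < w \<Longrightarrow> w < v2 \<Longrightarrow> same_block P v1 v2 \<Longrightarrow> \<chi> w = FaceB
   \<Longrightarrow> same_block P w v1"
  unfolding INC_cond_def by blast

lemma INC_partition_on: "P \<in> INC n \<chi> \<Longrightarrow> partition_on {1..n} P"
  unfolding INC_def noncrossing_def by blast

lemma one_part_INC: "1 \<le> n \<Longrightarrow> one_part n \<in> INC n \<chi>"
  unfolding INC_iff INC_cond_def one_part_def
proof (intro conjI allI impI noncrossingI)
  show "1 \<le> n \<Longrightarrow> partition_on {1..n} {{1..n}}" by (intro partition_on_space) auto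
qed (auto simp: same_block_def)

lemma refines_one_part: "partition_on {1..n} P \<Longrightarrow> refines P (one_part n)"
  unfolding Defs.refines_def one_part_def using partition_on_block_subset by blast

section \<open>Moebius functions of finite posets\<close>

definition finite_poset :: "'p set \<Rightarrow> ('p \<Rightarrow> 'p \<Rightarrow> bool) \<Rightarrow> bool" where
  "finite_poset S le \<longleftrightarrow> finite S \<and> (\<forall>x\<in>S. le x x)
     \<and> (\<forall>x\<in>S. \<forall>y\<in>S. \<forall>z\<in>S. le x y \<longrightarrow> le y z \<longrightarrow> le x z)
     \<and> (\<forall>x\<in>S. \<forall>y\<in>S. le x y \<longrightarrow> le y x \<longrightarrow> x = y)"

definition poset_interval :: "'p set \<Rightarrow> ('p \<Rightarrow> 'p \<Rightarrow> bool) \<Rightarrow> 'p \<Rightarrow> 'p \<Rightarrow> 'p set" where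
  "poset_interval S le x y = {z\<in>S. le x z \<and> le z y}"

context
  fixes S :: "'p set" and le :: "'p \<Rightarrow> 'p \<Rightarrow> bool"
  assumes poset: "finite_poset S le"
begin

lemma finite_poset_finite: "finite S"
  using poset unfolding finite_poset_def by blast

lemma finite_poset_refl: "x \<in> S \<Longrightarrow> le x x"
  using poset unfolding finite_poset_def by blast

lemma finite_poset_trans: "x \<in> S \<Longrightarrow> y \<in> S \<Longrightarrow> z \<in> S \<Longrightarrow> le x y \<Longrightarrow> le y z \<Longrightarrow> le x z"
  using poset unfolding finite_poset_def by blast

lemma finite_poset_antisym: "x \<in> S \<Longrightarrow> y \<in> S \<Longrightarrow> le x y \<Longrightarrow> le y x \<Longrightarrow> x = y"
  using poset unfolding finite_poset_def by blast

lemma card_poset_interval_less: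
  assumes "x \<in> S" "y \<in> S" "z \<in> poset_interval S le x y" "z \<noteq> y"
  shows "card (poset_interval S le x z) < card (poset_interval S le x y)"
proof (rule psubset_card_mono)
  show "finite (poset_interval S le x y)"
    using finite_poset_finite unfolding poset_interval_def by simp
  have z: "z \<in> S" "le x z" "le z y" using assms(3) unfolding poset_interval_def by auto
  have "poset_interval S le x z \<subseteq> poset_interval S le x y"
    using finite_poset_trans[OF _ z(1) assms(2) _ z(3)] unfolding poset_interval_def by blast
  moreover have "y \<in> poset_interval S le x y"
    using finite_poset_trans[OF assms(1) z(1) assms(2) z(2,3)] finite_poset_refl[OF assms(2)] assms(2)
    unfolding poset_interval_def by blast
  moreover have "y \<notin> poset_interval S le x z"
    using finite_poset_antisym[OF z(1) assms(2) z(3)] assms(4) unfolding poset_interval_def by blast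
  ultimately show "poset_interval S le x z \<subset> poset_interval S le x y" by blast
qed

lemma poset_interval_eq_insert:
  "le x y \<Longrightarrow> y \<in> S \<Longrightarrow> poset_interval S le x y = insert y {z\<in>S. le x z \<and> le z y \<and> z \<noteq> y}"
  using finite_poset_refl unfolding poset_interval_def by auto

lemma mob_fuel_cong:
  assumes "x \<in> S" "y \<in> S"
    and "card (poset_interval S le x y) \<le> Suc k1" "card (poset_interval S le x y) \<le> Suc k2"
  shows "mob_fuel k1 S le x y = mob_fuel k2 S le x y"
  using assms(2-)
proof (induction "card (poset_interval S le x y)" arbitrary: y k1 k2 rule: less_induct)
  case less
  consider "x = y" | "\<not> le x y" | "x \<noteq> y" "le x y" by blast
  then show ?case
  proof cases
    case 3
    have "{x, y} \<subseteq> poset_interval S le x y"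
      using 3 assms(1) less.prems(1) finite_poset_refl unfolding poset_interval_def by auto
    then have "2 \<le> card (poset_interval S le x y)"
      using 3 card_mono[OF _ \<open>{x, y} \<subseteq> _\<close>] finite_poset_finite
      unfolding poset_interval_def by fastforce
    then obtain j1 j2 where k: "k1 = Suc j1" "k2 = Suc j2"
      using less.prems by (cases k1; cases k2) auto
    have "mob_fuel j1 S le x z = mob_fuel j2 S le x z"
      if "z \<in> {z\<in>S. le x z \<and> le z y \<and> z \<noteq> y}" for z
    proof -
      have "card (poset_interval S le x z) < card (poset_interval S le x y)"
        using that card_poset_interval_less[OF assms(1) less.prems(1)]
        unfolding poset_interval_def by auto
      then show ?thesis using less that k by auto
    qed
    then show ?thesis using k 3 by simp
  qed (cases k1; cases k2; simp)+
qed

lemma mobius_rec: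
  assumes "x \<in> S" "y \<in> S"
  shows "mobius S le x y = (if x = y then 1 else if le x y then
           - (\<Sum>z\<in>{z\<in>S. le x z \<and> le z y \<and> z \<noteq> y}. mobius S le x z) else 0)"
proof -
  obtain k where k: "card S = Suc k"
    using assms(1) finite_poset_finite by (metis card_0_eq empty_iff not0_implies_Suc)
  have card_le: "card (poset_interval S le x z) \<le> card S" for z
    using finite_poset_finite unfolding poset_interval_def by (intro card_mono) auto
  have fuel: "mob_fuel k S le x z = mobius S le x z" if "z \<in> S" for z
    unfolding mobius_def using mob_fuel_cong[OF assms(1) that, of k "card S"] card_le[of z] k by simp
  have "mobius S le x y = mob_fuel (Suc k) S le x y" unfolding mobius_def k ..
  also have "\<dots> = (if x = y then 1 else if le x y then
           - (\<Sum>z\<in>{z\<in>S. le x z \<and> le z y \<and> z \<noteq> y}. mob_fuel k S le x z) else 0)"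
    by (simp only: mob_fuel.simps)
  also have "\<dots> = (if x = y then 1 else if le x y then
           - (\<Sum>z\<in>{z\<in>S. le x z \<and> le z y \<and> z \<noteq> y}. mobius S le x z) else 0)"
    using fuel by (intro if_cong refl arg_cong[where f=uminus] sum.cong) auto
  finally show ?thesis .
qed

lemma mobius_interval_sum:
  assumes "x \<in> S" "y \<in> S" "le x y"
  shows "(\<Sum>z\<in>poset_interval S le x y. mobius S le x z) = (if x = y then 1 else 0)"
proof (cases "x = y")
  case True
  have "z = y" if "z \<in> S" "le y z" "le z y" for z
    using finite_poset_antisym[OF that(1) assms(2) that(3,2)] .
  then have "poset_interval S le x y = {y}"
    using True assms(2) finite_poset_refl[OF assms(2)] unfolding poset_interval_def by auto
  then show ?thesis using True mobius_rec[OF assms(1,2)] by simp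
next
  case False
  have "finite {z\<in>S. le x z \<and> le z y \<and> z \<noteq> y}" using finite_poset_finite by simp
  then show ?thesis
    using False mobius_rec[OF assms(1,2)] assms(3) poset_interval_eq_insert[OF assms(3,2)] by simp
qed

lemma mobius_unique:
  assumes "x \<in> S" "t \<in> S"
    and g: "\<And>y. y \<in> S \<Longrightarrow> le x y \<Longrightarrow> le y t \<Longrightarrow>
        g y = (if x = y then 1 else - (\<Sum>z\<in>{z\<in>S. le x z \<and> le z y \<and> z \<noteq> y}. g z))"
  shows "y \<in> S \<Longrightarrow> le x y \<Longrightarrow> le y t \<Longrightarrow> g y = mobius S le x y"
proof (induction "card (poset_interval S le x y)" arbitrary: y rule: less_induct)
  case less
  have "g z = mobius S le x z" if z: "z \<in> {z\<in>S. le x z \<and> le z y \<and> z \<noteq> y}" for z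
  proof -
    have "card (poset_interval S le x z) < card (poset_interval S le x y)"
      using z card_poset_interval_less[OF assms(1) less.prems(1)] unfolding poset_interval_def by auto
    moreover have "le z t" using finite_poset_trans[of z y t] z less.prems assms(2) by blast
    ultimately show ?thesis using less.hyps z by blast
  qed
  then show ?case using g[OF less.prems] mobius_rec[OF assms(1) less.prems(1)] less.prems(2) by simp
qed

end

lemma bij_betw_poset_interval_product:
  assumes po: "finite_poset S le" "finite_poset S1 le1" "finite_poset S2 le2"
    and t: "t \<in> S" "t1 \<in> S1" "t2 \<in> S2"
    and bij: "bij_betw (\<lambda>z. (p1 z, p2 z)) {z\<in>S. le z t} ({z\<in>S1. le1 z t1} \<times> {z\<in>S2. le2 z t2})"
    and ord: "\<And>x y. x \<in> S \<Longrightarrow> le x t \<Longrightarrow> y \<in> S \<Longrightarrow> le y t \<Longrightarrow>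
        le x y \<longleftrightarrow> le1 (p1 x) (p1 y) \<and> le2 (p2 x) (p2 y)"
    and x: "x \<in> S" "le x t" and y: "y \<in> S" "le y t"
  shows "bij_betw (\<lambda>z. (p1 z, p2 z)) (poset_interval S le x y)
           (poset_interval S1 le1 (p1 x) (p1 y) \<times> poset_interval S2 le2 (p2 x) (p2 y))"
proof -
  have below_t: "z \<in> S" "le z t" if "z \<in> poset_interval S le x y" for z
    using that finite_poset_trans[OF po(1) _ y(1) t(1)] y unfolding poset_interval_def by blast+
  have inj: "inj_on (\<lambda>z. (p1 z, p2 z)) (poset_interval S le x y)"
    using inj_on_subset[OF bij_betw_imp_inj_on[OF bij]] below_t by blast
  have "(\<lambda>z. (p1 z, p2 z)) ` poset_interval S le x y =
        poset_interval S1 le1 (p1 x) (p1 y) \<times> poset_interval S2 le2 (p2 x) (p2 y)"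
  proof (intro equalityI subsetI)
    fix w assume "w \<in> (\<lambda>z. (p1 z, p2 z)) ` poset_interval S le x y"
    then obtain z where z: "z \<in> poset_interval S le x y" "w = (p1 z, p2 z)" by blast
    then show "w \<in> poset_interval S1 le1 (p1 x) (p1 y) \<times> poset_interval S2 le2 (p2 x) (p2 y)"
      using ord[OF x below_t[OF z(1)]] ord[OF below_t[OF z(1)] y] bij_betwE[OF bij] below_t[OF z(1)]
      unfolding poset_interval_def by auto
  next
    fix w assume w: "w \<in> poset_interval S1 le1 (p1 x) (p1 y) \<times> poset_interval S2 le2 (p2 x) (p2 y)"
    obtain a b where ab: "w = (a, b)" by fastforce
    have "p1 y \<in> S1" "le1 (p1 y) t1" "p2 y \<in> S2" "le2 (p2 y) t2"
      using bij_betwE[OF bij] y by auto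
    then have "le1 a t1" "le2 b t2"
      using w ab finite_poset_trans[OF po(2), of a "p1 y" t1] finite_poset_trans[OF po(3), of b "p2 y" t2] t
      unfolding poset_interval_def by auto
    then obtain z where z: "z \<in> S" "le z t" "p1 z = a" "p2 z = b"
      using bij_betw_imp_surj_on[OF bij] w ab unfolding poset_interval_def by force
    then show "w \<in> (\<lambda>z. (p1 z, p2 z)) ` poset_interval S le x y"
      using ord[OF x z(1,2)] ord[OF z(1,2) y] w ab unfolding poset_interval_def by auto
  qed
  then show ?thesis using inj unfolding bij_betw_def by blast
qed

lemma mobius_product:
  assumes po: "finite_poset S le" "finite_poset S1 le1" "finite_poset S2 le2"
    and t: "t \<in> S" "t1 \<in> S1" "t2 \<in> S2"
    and bij: "bij_betw (\<lambda>z. (p1 z, p2 z)) {z\<in>S. le z t} ({z\<in>S1. le1 z t1} \<times> {z\<in>S2. le2 z t2})"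
    and ord: "\<And>x y. x \<in> S \<Longrightarrow> le x t \<Longrightarrow> y \<in> S \<Longrightarrow> le y t \<Longrightarrow>
        le x y \<longleftrightarrow> le1 (p1 x) (p1 y) \<and> le2 (p2 x) (p2 y)"
    and pt: "p1 t = t1" "p2 t = t2"
    and x: "x \<in> S" "le x t"
  shows "mobius S le x t = mobius S1 le1 (p1 x) t1 * mobius S2 le2 (p2 x) t2"
proof -
  define g where "g y = mobius S1 le1 (p1 x) (p1 y) * mobius S2 le2 (p2 x) (p2 y)" for y
  have in_factors: "p1 y \<in> S1 \<and> p2 y \<in> S2" if "y \<in> S" "le y t" for y
    using bij_betwE[OF bij] that by auto
  have "g y = (if x = y then 1 else - (\<Sum>z\<in>{z\<in>S. le x z \<and> le z y \<and> z \<noteq> y}. g z))"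
    if y: "y \<in> S" "le x y" "le y t" for y
  proof (cases "x = y")
    case True
    then show ?thesis
      unfolding g_def using mobius_rec[OF po(2)] mobius_rec[OF po(3)] in_factors[OF x] by simp
  next
    case False
    have "(\<Sum>z\<in>poset_interval S le x y. g z) =
          (\<Sum>w\<in>poset_interval S1 le1 (p1 x) (p1 y) \<times> poset_interval S2 le2 (p2 x) (p2 y).
             mobius S1 le1 (p1 x) (fst w) * mobius S2 le2 (p2 x) (snd w))"
      using sum.reindex_bij_betw[OF bij_betw_poset_interval_product[OF assms(1-8) x y(1,3)],
          of "\<lambda>w. mobius S1 le1 (p1 x) (fst w) * mobius S2 le2 (p2 x) (snd w)"]
      unfolding g_def by simp
    also have "\<dots> = (\<Sum>a\<in>poset_interval S1 le1 (p1 x) (p1 y). mobius S1 le1 (p1 x) a)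
                  * (\<Sum>b\<in>poset_interval S2 le2 (p2 x) (p2 y). mobius S2 le2 (p2 x) b)"
      by (simp add: sum_product sum.cartesian_product case_prod_beta)
    also have "\<dots> = 0"
    proof -
      have "(p1 x, p2 x) \<noteq> (p1 y, p2 y)"
        using False bij_betw_imp_inj_on[OF bij] x y(1,3) unfolding inj_on_def by blast
      then show ?thesis
        using ord[OF x y(1,3)] y(2) mobius_interval_sum[OF po(2)] mobius_interval_sum[OF po(3)]
          in_factors[OF x] in_factors[OF y(1,3)] by auto
    qed
    finally have "(\<Sum>z\<in>poset_interval S le x y. g z) = 0" .
    then show ?thesis
      using False poset_interval_eq_insert[OF po(1) y(2,1)] finite_poset_finite[OF po(1)]
      by (simp add: eq_neg_iff_add_eq_0)
  qed
  then have "g t = mobius S le x t"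
    using mobius_unique[OF po(1) x(1) t(1), of g] t(1) x(2) finite_poset_refl[OF po(1) t(1)] by blast
  then show ?thesis unfolding g_def using pt by simp
qed

section \<open>Cutting an interval out of a partition\<close>

definition shift_up :: "nat \<Rightarrow> nat \<Rightarrow> nat \<Rightarrow> nat" where
  "shift_up l s j = (if j \<le> l then j else j + s)"

lemma shift_down_shift_up [simp]: "shift_down l s (shift_up l s j) = j"
  unfolding shift_down_def shift_up_def by auto

lemma shift_up_shift_down: "j \<notin> {l+1..l+s} \<Longrightarrow> shift_up l s (shift_down l s j) = j"
  unfolding shift_down_def shift_up_def by auto

lemma shift_up_less_iff [simp]: "shift_up l s a < shift_up l s b \<longleftrightarrow> a < b"
  unfolding shift_up_def by auto

lemma shift_up_notin: "shift_up l s j \<notin> {l+1..l+s}"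
  unfolding shift_up_def by auto

lemma shift_up_in_range: "j \<in> {1..n-s} \<Longrightarrow> l + s \<le> n \<Longrightarrow> shift_up l s j \<in> {1..n} - {l+1..l+s}"
  unfolding shift_up_def by auto

lemma shift_down_in_range:
  "j \<in> {1..n} - {l+1..l+s} \<Longrightarrow> l + s \<le> n \<Longrightarrow> shift_down l s j \<in> {1..n-s}"
  unfolding shift_down_def by auto

lemma shift_down_less:
  "a \<notin> {l+1..l+s} \<Longrightarrow> b \<notin> {l+1..l+s} \<Longrightarrow> a < b \<Longrightarrow> shift_down l s a < shift_down l s b"
  unfolding shift_down_def by auto

lemma bij_betw_shift_down:
  assumes "l + s \<le> n"
  shows "bij_betw (shift_down l s) ({1..n} - {l+1..l+s}) {1..n-s}"
  by (rule bij_betw_byWitness[where f' = "shift_up l s"])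
    (use assms in \<open>auto simp: shift_down_def shift_up_def\<close>)

lemma bij_betw_minus_offset: "bij_betw (\<lambda>j. j - l) {l+1..l+s} {1..s::nat}"
  by (rule bij_betw_byWitness[where f' = "\<lambda>j. j + l"]) auto

lemma partition_on_image_subfamily:
  assumes P: "partition_on A P" and C: "C \<subseteq> A" "\<forall>V\<in>P. V \<subseteq> C \<or> V \<inter> C = {}"
    and f: "bij_betw f C D"
  shows "partition_on D ((\<lambda>V. f ` V) ` {V\<in>P. V \<subseteq> C})"
    and "x \<in> C \<Longrightarrow> y \<in> C \<Longrightarrow>
      same_block ((\<lambda>V. f ` V) ` {V\<in>P. V \<subseteq> C}) (f x) (f y) \<longleftrightarrow> same_block P x y"
proof -
  have "x \<in> \<Union>{V\<in>P. V \<subseteq> C}" if x: "x \<in> C" for x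
  proof -
    obtain V where "V \<in> P" "x \<in> V" using partition_on_covers[OF P] C(1) x by blast
    then show ?thesis using C(2) x by blast
  qed
  then have "\<Union>{V\<in>P. V \<subseteq> C} = C" by blast
  then have Q: "partition_on C {V\<in>P. V \<subseteq> C}"
    using partition_on_subset[OF P, of "{V\<in>P. V \<subseteq> C}"] by auto
  show "partition_on D ((\<lambda>V. f ` V) ` {V\<in>P. V \<subseteq> C})"
    using partition_on_image[OF Q bij_betw_imp_inj_on[OF f]] bij_betw_imp_surj_on[OF f] by simp
  assume xy: "x \<in> C" "y \<in> C"
  have "same_block P x y \<Longrightarrow> same_block {V\<in>P. V \<subseteq> C} x y"
  proof -
    assume "same_block P x y"
    then obtain V where "V \<in> P" "x \<in> V" "y \<in> V" unfolding same_block_def by blast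
    moreover have "V \<subseteq> C" using calculation C(2) xy by blast
    ultimately show ?thesis unfolding same_block_def by blast
  qed
  moreover have "same_block {V\<in>P. V \<subseteq> C} x y \<Longrightarrow> same_block P x y"
    unfolding same_block_def by blast
  ultimately show "same_block ((\<lambda>V. f ` V) ` {V\<in>P. V \<subseteq> C}) (f x) (f y) \<longleftrightarrow> same_block P x y"
    using same_block_image_iff[OF Q bij_betw_imp_inj_on[OF f] xy] by blast
qed

definition splits :: "nat \<Rightarrow> nat \<Rightarrow> nat set set \<Rightarrow> bool" where
  "splits l s P \<longleftrightarrow> (\<forall>V\<in>P. V \<subseteq> {l+1..l+s} \<or> V \<inter> {l+1..l+s} = {})"

definition outer :: "nat \<Rightarrow> nat \<Rightarrow> nat set set \<Rightarrow> nat set set" where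
  "outer l s P = (\<lambda>V. shift_down l s ` V) ` {V\<in>P. V \<inter> {l+1..l+s} = {}}"

definition inner :: "nat \<Rightarrow> nat \<Rightarrow> nat set set \<Rightarrow> nat set set" where
  "inner l s P = (\<lambda>V. (\<lambda>j. j - l) ` V) ` {V\<in>P. V \<subseteq> {l+1..l+s}}"

definition glue :: "nat \<Rightarrow> nat \<Rightarrow> nat set set \<Rightarrow> nat set set \<Rightarrow> nat set set" where
  "glue l s T R = (\<lambda>V. (\<lambda>j. j + l) ` V) ` T \<union> (\<lambda>V. shift_up l s ` V) ` R"

context
  fixes n l s :: nat and P :: "nat set set"
  assumes P: "partition_on {1..n} P" and sp: "splits l s P" and n: "l + s \<le> n"
begin

lemma outer_eq_subfamily:
  "outer l s P = (\<lambda>V. shift_down l s ` V) ` {V\<in>P. V \<subseteq> {1..n} - {l+1..l+s}}"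
proof -
  have "{V\<in>P. V \<inter> {l+1..l+s} = {}} = {V\<in>P. V \<subseteq> {1..n} - {l+1..l+s}}"
    using partition_on_block_subset[OF P] by blast
  then show ?thesis unfolding outer_def by simp
qed

lemma outer_subfamily_conditions:
  "{1..n} - {l+1..l+s} \<subseteq> {1..n}" "\<forall>V\<in>P. V \<subseteq> {1..n} - {l+1..l+s} \<or> V \<inter> ({1..n} - {l+1..l+s}) = {}"
  using sp partition_on_block_subset[OF P] unfolding splits_def by blast+

lemma partition_on_outer: "partition_on {1..n-s} (outer l s P)"
  unfolding outer_eq_subfamily
  by (rule partition_on_image_subfamily(1)[OF P outer_subfamily_conditions bij_betw_shift_down[OF n]])

lemma same_block_outer_iff:
  "same_block (outer l s P) x y \<longleftrightarrow>
     x \<in> {1..n-s} \<and> y \<in> {1..n-s} \<and> same_block P (shift_up l s x) (shift_up l s y)"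
proof (cases "x \<in> {1..n-s} \<and> y \<in> {1..n-s}")
  case True
  then show ?thesis
    using partition_on_image_subfamily(2)[OF P outer_subfamily_conditions bij_betw_shift_down[OF n],
        of "shift_up l s x" "shift_up l s y"] shift_up_in_range[OF _ n]
    unfolding outer_eq_subfamily by simp
qed (use same_block_in_carrier[OF partition_on_outer] in blast)

lemma inner_subfamily_conditions:
  "{l+1..l+s} \<subseteq> {1..n}" "\<forall>V\<in>P. V \<subseteq> {l+1..l+s} \<or> V \<inter> {l+1..l+s} = {}"
  using sp n unfolding splits_def by auto

lemma partition_on_inner: "partition_on {1..s} (inner l s P)"
  unfolding inner_def
  by (rule partition_on_image_subfamily(1)[OF P inner_subfamily_conditions bij_betw_minus_offset])

lemma same_block_inner_iff:
  "same_block (inner l s P) x y \<longleftrightarrow> x \<in> {1..s} \<and> y \<in> {1..s} \<and> same_block P (x + l) (y + l)"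
proof (cases "x \<in> {1..s} \<and> y \<in> {1..s}")
  case True
  then show ?thesis
    using partition_on_image_subfamily(2)[OF P inner_subfamily_conditions bij_betw_minus_offset,
        of "x + l" "y + l"]
    unfolding inner_def by simp
qed (use same_block_in_carrier[OF partition_on_inner] in blast)

end

context
  fixes n l s :: nat and T R :: "nat set set"
  assumes T: "partition_on {1..s} T" and R: "partition_on {1..n-s} R" and n: "l + s \<le> n"
begin

lemma bij_betw_plus_offset: "bij_betw (\<lambda>j. j + l) {1..s} {l+1..l+s}"
  by (rule bij_betw_byWitness[where f' = "\<lambda>j. j - l"]) auto

lemma bij_betw_shift_up: "bij_betw (shift_up l s) {1..n-s} ({1..n} - {l+1..l+s})"
  by (rule bij_betw_byWitness[where f' = "shift_down l s"])
    (use n in \<open>auto simp: shift_down_def shift_up_def\<close>)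

lemma partition_on_glue: "partition_on {1..n} (glue l s T R)"
proof -
  have "{l+1..l+s} \<union> ({1..n} - {l+1..l+s}) = {1..n}" using n by auto
  moreover have "partition_on ({l+1..l+s} \<union> ({1..n} - {l+1..l+s})) (glue l s T R)"
    using partition_on_Un[OF partition_on_image[OF T bij_betw_imp_inj_on[OF bij_betw_plus_offset]]
        partition_on_image[OF R bij_betw_imp_inj_on[OF bij_betw_shift_up]]]
    unfolding glue_def bij_betw_imp_surj_on[OF bij_betw_plus_offset]
      bij_betw_imp_surj_on[OF bij_betw_shift_up] by blast
  ultimately show ?thesis by simp
qed

lemma same_block_glue_iff:
  "same_block (glue l s T R) x y \<longleftrightarrow>
     (x \<in> {l+1..l+s} \<and> y \<in> {l+1..l+s} \<and> same_block T (x - l) (y - l)) \<or>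
     (x \<in> {1..n} - {l+1..l+s} \<and> y \<in> {1..n} - {l+1..l+s}
       \<and> same_block R (shift_down l s x) (shift_down l s y))"
proof -
  have T': "partition_on {l+1..l+s} ((\<lambda>V. (\<lambda>j. j + l) ` V) ` T)"
    using partition_on_image[OF T bij_betw_imp_inj_on[OF bij_betw_plus_offset]]
    unfolding bij_betw_imp_surj_on[OF bij_betw_plus_offset] .
  have R': "partition_on ({1..n} - {l+1..l+s}) ((\<lambda>V. shift_up l s ` V) ` R)"
    using partition_on_image[OF R bij_betw_imp_inj_on[OF bij_betw_shift_up]]
    unfolding bij_betw_imp_surj_on[OF bij_betw_shift_up] .
  have "same_block ((\<lambda>V. (\<lambda>j. j + l) ` V) ` T) x y \<longleftrightarrow>
        x \<in> {l+1..l+s} \<and> y \<in> {l+1..l+s} \<and> same_block T (x - l) (y - l)"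
  proof (cases "x \<in> {l+1..l+s} \<and> y \<in> {l+1..l+s}")
    case True
    then have "x - l \<in> {1..s}" "y - l \<in> {1..s}" "x - l + l = x" "y - l + l = y" by auto
    then show ?thesis
      using same_block_image_iff[OF T bij_betw_imp_inj_on[OF bij_betw_plus_offset], of "x - l" "y - l"]
        True by simp
  qed (use same_block_in_carrier[OF T'] in blast)
  moreover have "same_block ((\<lambda>V. shift_up l s ` V) ` R) x y \<longleftrightarrow>
        x \<in> {1..n} - {l+1..l+s} \<and> y \<in> {1..n} - {l+1..l+s}
        \<and> same_block R (shift_down l s x) (shift_down l s y)"
  proof (cases "x \<in> {1..n} - {l+1..l+s} \<and> y \<in> {1..n} - {l+1..l+s}")
    case True
    then show ?thesis
      using same_block_image_iff[OF R bij_betw_imp_inj_on[OF bij_betw_shift_up],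
          of "shift_down l s x" "shift_down l s y"]
        shift_down_in_range[OF _ n] shift_up_shift_down by simp
  qed (use same_block_in_carrier[OF R'] in blast)
  ultimately show ?thesis unfolding glue_def same_block_Un by blast
qed

lemma splits_glue: "splits l s (glue l s T R)"
  using partition_on_block_subset[OF T] shift_up_notin unfolding splits_def glue_def by fastforce

lemma inner_glue: "inner l s (glue l s T R) = T"
  by (rule partition_on_eqI[OF partition_on_inner[OF partition_on_glue splits_glue n] T])
    (auto simp: same_block_inner_iff[OF partition_on_glue splits_glue n] same_block_glue_iff)

lemma outer_glue: "outer l s (glue l s T R) = R"
  by (rule partition_on_eqI[OF partition_on_outer[OF partition_on_glue splits_glue n] R])
    (use shift_up_in_range[OF _ n] in
      \<open>auto simp: same_block_outer_iff[OF partition_on_glue splits_glue n] same_block_glue_iff\<close>)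

end

lemma splits_if_block:
  assumes "partition_on A P" "{l+1..l+s} \<in> P"
  shows "splits l s P"
  unfolding splits_def using partition_on_block_eq[OF assms(1) _ assms(2)] by blast

lemma splits_if_refines:
  assumes P: "partition_on A P" and W: "{l+1..l+s} \<in> P"
    and r: "\<And>x y. same_block S x y \<Longrightarrow> same_block P x y"
  shows "splits l s S"
  unfolding splits_def
proof
  fix V assume V: "V \<in> S"
  show "V \<subseteq> {l+1..l+s} \<or> V \<inter> {l+1..l+s} = {}"
  proof (cases "V \<inter> {l+1..l+s} = {}")
    case False
    then obtain x where x: "x \<in> V" "x \<in> {l+1..l+s}" by blast
    have "y \<in> {l+1..l+s}" if "y \<in> V" for y
    proof -
      have "same_block S x y" using V x that unfolding same_block_def by blast
      then show ?thesis using r same_block_iff_in_block[OF P W x(2)] by blast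
    qed
    then show ?thesis by blast
  qed simp
qed

context
  fixes n l s :: nat and P :: "nat set set"
  assumes P: "partition_on {1..n} P" and sp: "splits l s P" and n: "l + s \<le> n"
begin

lemma same_block_inner_outer_iff:
  "same_block P x y \<longleftrightarrow>
     (x \<in> {l+1..l+s} \<and> y \<in> {l+1..l+s} \<and> same_block (inner l s P) (x - l) (y - l)) \<or>
     (x \<in> {1..n} - {l+1..l+s} \<and> y \<in> {1..n} - {l+1..l+s}
       \<and> same_block (outer l s P) (shift_down l s x) (shift_down l s y))"
proof
  assume xy: "same_block P x y"
  then have "x \<in> {1..n}" "y \<in> {1..n}" using same_block_in_carrier[OF P] by blast+
  moreover from xy obtain V where "V \<in> P" "x \<in> V" "y \<in> V" unfolding same_block_def by blast
  then have "x \<in> {l+1..l+s} \<longleftrightarrow> y \<in> {l+1..l+s}" using sp unfolding splits_def by blast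
  ultimately show "(x \<in> {l+1..l+s} \<and> y \<in> {l+1..l+s} \<and> same_block (inner l s P) (x - l) (y - l)) \<or>
     (x \<in> {1..n} - {l+1..l+s} \<and> y \<in> {1..n} - {l+1..l+s}
       \<and> same_block (outer l s P) (shift_down l s x) (shift_down l s y))"
    using xy shift_down_in_range[OF _ n] shift_up_shift_down
    by (auto simp: same_block_inner_iff[OF P sp n] same_block_outer_iff[OF P sp n])
next
  assume "(x \<in> {l+1..l+s} \<and> y \<in> {l+1..l+s} \<and> same_block (inner l s P) (x - l) (y - l)) \<or>
     (x \<in> {1..n} - {l+1..l+s} \<and> y \<in> {1..n} - {l+1..l+s}
       \<and> same_block (outer l s P) (shift_down l s x) (shift_down l s y))"
  then show "same_block P x y"
  proof (elim disjE conjE)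
    assume "x \<in> {l+1..l+s}" "y \<in> {l+1..l+s}" "same_block (inner l s P) (x - l) (y - l)"
    then show ?thesis using same_block_inner_iff[OF P sp n] by auto
  next
    assume "x \<in> {1..n} - {l+1..l+s}" "y \<in> {1..n} - {l+1..l+s}"
      "same_block (outer l s P) (shift_down l s x) (shift_down l s y)"
    then show ?thesis using same_block_outer_iff[OF P sp n] shift_up_shift_down by (metis DiffD2)
  qed
qed

lemma glue_inner_outer: "glue l s (inner l s P) (outer l s P) = P"
  by (rule partition_on_eqI[OF partition_on_glue[OF partition_on_inner[OF P sp n]
        partition_on_outer[OF P sp n] n] P])
    (simp add: same_block_glue_iff[OF partition_on_inner[OF P sp n] partition_on_outer[OF P sp n] n]
      same_block_inner_outer_iff)

lemma noncrossing_outer: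
  assumes "noncrossing n P"
  shows "noncrossing (n-s) (outer l s P)"
proof (rule noncrossingI[OF partition_on_outer[OF P sp n]])
  fix a b c d
  assume "a < b" "b < c" "c < d" and ac: "same_block (outer l s P) a c" and bd: "same_block (outer l s P) b d"
  then have "same_block P (shift_up l s a) (shift_up l s b)"
    using noncrossingD[OF assms, of "shift_up l s a" "shift_up l s b" "shift_up l s c" "shift_up l s d"]
      same_block_outer_iff[OF P sp n] by simp
  then show "same_block (outer l s P) a b" using ac bd same_block_outer_iff[OF P sp n] by blast
qed

lemma noncrossing_inner:
  assumes "noncrossing n P"
  shows "noncrossing s (inner l s P)"
proof (rule noncrossingI[OF partition_on_inner[OF P sp n]])
  fix a b c d
  assume "a < b" "b < c" "c < d" and ac: "same_block (inner l s P) a c" and bd: "same_block (inner l s P) b d"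
  then have "same_block P (a + l) (b + l)"
    using noncrossingD[OF assms, of "a + l" "b + l" "c + l" "d + l"]
      same_block_inner_iff[OF P sp n] by simp
  then show "same_block (inner l s P) a b" using ac bd same_block_inner_iff[OF P sp n] by blast
qed

lemma INC_cond_outer:
  assumes "INC_cond \<chi> P"
  shows "INC_cond (\<lambda>j. \<chi> (shift_up l s j)) (outer l s P)"
  unfolding INC_cond_def
proof (intro allI impI)
  fix v1 w v2
  assume h: "v1 < w \<and> w < v2 \<and> same_block (outer l s P) v1 v2 \<and> \<chi> (shift_up l s w) = FaceB"
  then have "v1 \<in> {1..n-s}" "v2 \<in> {1..n-s}" "same_block P (shift_up l s v1) (shift_up l s v2)"
    using same_block_outer_iff[OF P sp n] by blast+
  moreover have "w \<in> {1..n-s}" using h calculation(1,2) by auto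
  moreover have "same_block P (shift_up l s w) (shift_up l s v1)"
    using INC_condD[OF assms, of "shift_up l s v1" "shift_up l s w" "shift_up l s v2"] h calculation(3)
    by simp
  ultimately show "same_block (outer l s P) w v1" using same_block_outer_iff[OF P sp n] by blast
qed

lemma INC_cond_inner:
  assumes "INC_cond \<chi> P"
  shows "INC_cond (\<lambda>j. \<chi> (j + l)) (inner l s P)"
  unfolding INC_cond_def
proof (intro allI impI)
  fix v1 w v2
  assume h: "v1 < w \<and> w < v2 \<and> same_block (inner l s P) v1 v2 \<and> \<chi> (w + l) = FaceB"
  then have "v1 \<in> {1..s}" "v2 \<in> {1..s}" "same_block P (v1 + l) (v2 + l)"
    using same_block_inner_iff[OF P sp n] by blast+
  moreover have "w \<in> {1..s}" using h calculation(1,2) by auto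
  moreover have "same_block P (w + l) (v1 + l)"
    using INC_condD[OF assms, of "v1 + l" "w + l" "v2 + l"] h calculation(3) by simp
  ultimately show "same_block (inner l s P) w v1" using same_block_inner_iff[OF P sp n] by blast
qed

end

lemma refines_iff_inner_outer:
  assumes P1: "partition_on {1..n} P1" "splits l s P1" and P2: "partition_on {1..n} P2" "splits l s P2"
    and n: "l + s \<le> n"
  shows "refines P1 P2 \<longleftrightarrow>
    refines (inner l s P1) (inner l s P2) \<and> refines (outer l s P1) (outer l s P2)"
proof
  assume "refines P1 P2"
  then have h: "same_block P1 x y \<Longrightarrow> same_block P2 x y" for x y
    using refines_iff_same_block[OF P1(1) P2(1)] by blast
  have "refines (inner l s P1) (inner l s P2)"
    unfolding refines_iff_same_block[OF partition_on_inner[OF P1 n] partition_on_inner[OF P2 n]]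
      same_block_inner_iff[OF P1 n] same_block_inner_iff[OF P2 n] using h by blast
  moreover have "refines (outer l s P1) (outer l s P2)"
    unfolding refines_iff_same_block[OF partition_on_outer[OF P1 n] partition_on_outer[OF P2 n]]
      same_block_outer_iff[OF P1 n] same_block_outer_iff[OF P2 n] using h by blast
  ultimately show "refines (inner l s P1) (inner l s P2) \<and> refines (outer l s P1) (outer l s P2)" ..
next
  assume "refines (inner l s P1) (inner l s P2) \<and> refines (outer l s P1) (outer l s P2)"
  then have "same_block (inner l s P1) x y \<Longrightarrow> same_block (inner l s P2) x y"
    and "same_block (outer l s P1) x y \<Longrightarrow> same_block (outer l s P2) x y" for x y
    using refines_iff_same_block[OF partition_on_inner[OF P1 n] partition_on_inner[OF P2 n]]
      refines_iff_same_block[OF partition_on_outer[OF P1 n] partition_on_outer[OF P2 n]] by blast+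
  then show "refines P1 P2"
    unfolding refines_iff_same_block[OF P1(1) P2(1)]
      same_block_inner_outer_iff[OF P1 n] same_block_inner_outer_iff[OF P2 n] by blast
qed

lemma noncrossing_glue:
  assumes T: "noncrossing s T" and R: "noncrossing (n-s) R" and n: "l + s \<le> n"
  shows "noncrossing n (glue l s T R)"
proof (rule noncrossingI[OF partition_on_glue[OF noncrossing_partition_on[OF T]
      noncrossing_partition_on[OF R] n]])
  note glue_iff = same_block_glue_iff[OF noncrossing_partition_on[OF T] noncrossing_partition_on[OF R] n]
  fix a b c d
  assume abcd: "a < b" "b < c" "c < d"
    and ac: "same_block (glue l s T R) a c" and bd: "same_block (glue l s T R) b d"
  show "same_block (glue l s T R) a b"
  proof (cases "a \<in> {l+1..l+s}")
    case True
    then have "c \<in> {l+1..l+s}" "same_block T (a - l) (c - l)" using ac glue_iff by blast+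
    moreover from calculation have "b \<in> {l+1..l+s}" using True abcd by auto
    moreover from calculation have "d \<in> {l+1..l+s}" "same_block T (b - l) (d - l)"
      using bd glue_iff by blast+
    ultimately have "same_block T (a - l) (b - l)"
      using noncrossingD[OF T, of "a - l" "b - l" "c - l" "d - l"] True abcd by auto
    then show ?thesis using glue_iff True \<open>b \<in> {l+1..l+s}\<close> by blast
  next
    case False
    then have a: "a \<in> {1..n} - {l+1..l+s}" and c: "c \<in> {1..n} - {l+1..l+s}"
      and "same_block R (shift_down l s a) (shift_down l s c)" using ac glue_iff by blast+
    moreover have "b \<in> {1..n} - {l+1..l+s}" "d \<in> {1..n} - {l+1..l+s}"
      and "same_block R (shift_down l s b) (shift_down l s d)"
      using bd glue_iff a c abcd by auto
    ultimately have "same_block R (shift_down l s a) (shift_down l s b)"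
      using noncrossingD[OF R] shift_down_less abcd by (metis DiffD2)
    then show ?thesis using glue_iff a \<open>b \<in> {1..n} - {l+1..l+s}\<close> by blast
  qed
qed

text \<open>A Boolean position between two points of a block of \<open>R\<close> that lies inside the interval would
  violate the \<open>INC\<close> condition of \<open>PP\<close>; this is why \<open>R\<close> must refine the outer part of \<open>PP\<close>.\<close>
lemma INC_cond_glue:
  assumes T: "partition_on {1..s} T" "INC_cond (\<lambda>j. \<chi> (j + l)) T"
    and R: "partition_on {1..n-s} R" "INC_cond (\<lambda>j. \<chi> (shift_up l s j)) R"
    and n: "l + s \<le> n"
    and PP: "partition_on {1..n} PP" "INC_cond \<chi> PP" "{l+1..l+s} \<in> PP"
    and R_le: "\<And>x y. same_block R x y \<Longrightarrow> same_block (outer l s PP) x y"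
  shows "INC_cond \<chi> (glue l s T R)"
  unfolding INC_cond_def
proof (intro allI impI)
  note glue_iff = same_block_glue_iff[OF T(1) R(1) n]
  note outer_iff = same_block_outer_iff[OF PP(1) splits_if_block[OF PP(1,3)] n]
  fix v1 w v2 assume h: "v1 < w \<and> w < v2 \<and> same_block (glue l s T R) v1 v2 \<and> \<chi> w = FaceB"
  show "same_block (glue l s T R) w v1"
  proof (cases "v1 \<in> {l+1..l+s}")
    case True
    then have v2: "v2 \<in> {l+1..l+s}" "same_block T (v1 - l) (v2 - l)" using h glue_iff by blast+
    then have w: "w \<in> {l+1..l+s}" using h True by auto
    have "same_block T (w - l) (v1 - l)"
      using INC_condD[OF T(2), of "v1 - l" "w - l" "v2 - l"] v2 h True w by auto
    then show ?thesis using glue_iff w True by blast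
  next
    case False
    then have v: "v1 \<in> {1..n} - {l+1..l+s}" "v2 \<in> {1..n} - {l+1..l+s}"
      and R12: "same_block R (shift_down l s v1) (shift_down l s v2)" using h glue_iff by blast+
    have "same_block PP v1 v2"
      using R_le[OF R12] outer_iff shift_up_shift_down v by (metis DiffD2)
    then have "same_block PP w v1" using INC_condD[OF PP(2)] h by blast
    then have wW: "w \<notin> {l+1..l+s}" using same_block_iff_in_block[OF PP(1,3)] v by blast
    then have w: "w \<in> {1..n} - {l+1..l+s}" using h v by auto
    have "same_block R (shift_down l s w) (shift_down l s v1)"
      using INC_condD[OF R(2), of "shift_down l s v1" "shift_down l s w" "shift_down l s v2"]
        R12 h v w shift_down_less shift_up_shift_down[OF wW] by auto
    then show ?thesis using glue_iff w v by blast
  qed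
qed

lemma finite_poset_INC: "finite_poset (INC n \<chi>) refines"
  unfolding finite_poset_def
proof (intro conjI ballI impI)
  show "finite (INC n \<chi>)"
    using finitely_many_partition_on[of "{1..n}"] INC_partition_on
    by (metis finite_subset mem_Collect_eq subsetI finite_atLeastAtMost)
next
  fix x assume "x \<in> INC n \<chi>" then show "refines x x" unfolding Defs.refines_def by blast
next
  fix x y z assume "refines x y" "refines y z" then show "refines x z"
    unfolding Defs.refines_def by (meson order_trans)
next
  fix x y assume "x \<in> INC n \<chi>" "y \<in> INC n \<chi>" "refines x y" "refines y x"
  then show "x = y"
    using Disjoint_Sets.refines_asym[of "{1..n}" x y] INC_partition_on
    unfolding Disjoint_Sets.refines_def Defs.refines_def by blast
qed

lemma noncrossing_nested_inside:
  assumes P: "noncrossing n P" and ab: "same_block P a b" "a < x" "x < b"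
    and ax: "\<not> same_block P a x" and xy: "same_block P x y"
  shows "a < y \<and> y < b"
proof -
  have part: "partition_on {1..n} P" using noncrossing_partition_on[OF P] .
  have a_y: "\<not> same_block P a y"
    using ax same_block_trans[OF part _ same_block_sym[OF xy]] by blast
  have "y \<noteq> a" using a_y same_block_trans[OF part ab(1) same_block_sym[OF ab(1)]] by blast
  moreover have "y \<noteq> b" using a_y ab(1) by blast
  moreover have "\<not> y < a"
  proof
    assume "y < a"
    then have "same_block P y a" using noncrossingD[OF P _ ab(2,3) same_block_sym[OF xy] ab(1)] by blast
    then show False using a_y same_block_sym by blast
  qed
  moreover have "\<not> b < y"
    using noncrossingD[OF P ab(2,3) _ ab(1) xy] ax by blast
  ultimately show ?thesis by linarith
qed

lemma block_eq_interval_if_min_span: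
  assumes P: "noncrossing n P" and V: "V \<in> P" "n \<notin> V"
    and min: "\<And>X. X \<in> P \<Longrightarrow> n \<notin> X \<Longrightarrow> Max V - Min V \<le> Max X - Min X"
  shows "V = {Min V..Max V}"
proof -
  have part: "partition_on {1..n} P" using noncrossing_partition_on[OF P] .
  have fin: "finite X" if "X \<in> P" for X
    using partition_on_block_subset[OF part that] finite_subset by blast
  define a b where "a = Min V" and "b = Max V"
  have aV: "a \<in> V" and bV: "b \<in> V" and ab: "\<And>x. x \<in> V \<Longrightarrow> a \<le> x \<and> x \<le> b"
    using partition_on_block_nonempty[OF part V(1)] fin[OF V(1)] unfolding a_def b_def by auto
  have "a \<in> {1..n}" "b \<in> {1..n}" "b \<noteq> n" using partition_on_block_subset[OF part V(1)] aV bV V(2) by auto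
  then have a1: "1 \<le> a" and bn: "b < n" by auto
  have sab: "same_block P a b" using aV bV V(1) unfolding same_block_def by blast
  have "x \<in> V" if x: "a < x" "x < b" for x
  proof (rule ccontr)
    assume "x \<notin> V"
    then have ax: "\<not> same_block P a x" using same_block_iff_in_block[OF part V(1) aV] by blast
    obtain X where X: "X \<in> P" "x \<in> X" using partition_on_covers[OF part, of x] x a1 bn by auto
    have inside: "a < y \<and> y < b" if "y \<in> X" for y
    proof -
      have "same_block P x y" using X that unfolding same_block_def by blast
      then show ?thesis using noncrossing_nested_inside[OF P sab x ax] by blast
    qed
    then have "n \<notin> X" using bn by (meson order.asym order.strict_trans)
    have "Max X \<in> X" "Min X \<in> X" using Max_in[OF fin[OF X(1)]] Min_in[OF fin[OF X(1)]] X(2) by blast+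
    then have "Max X < b" "Min X > a" using inside by auto
    then have "Max X - Min X < b - a"
      using Min_le[OF fin[OF X(1)] X(2)] Max_ge[OF fin[OF X(1)] X(2)] by linarith
    then show False using min[OF X(1) \<open>n \<notin> X\<close>] unfolding a_def b_def by linarith
  qed
  then have "{a..b} \<subseteq> V" using aV bV by (auto simp: le_less)
  then show ?thesis using ab unfolding a_def[symmetric] b_def[symmetric] by auto
qed

lemma exists_block_avoiding:
  assumes part: "partition_on {1..n} P" and ne: "P \<noteq> one_part n" and n: "1 \<le> n"
  shows "\<exists>V\<in>P. n \<notin> V"
proof (rule ccontr)
  obtain B where B: "B \<in> P" "n \<in> B" using partition_on_covers[OF part, of n] n by auto
  assume "\<not> (\<exists>V\<in>P. n \<notin> V)"
  then have "\<And>V. V \<in> P \<Longrightarrow> V = B" using partition_on_block_eq[OF part _ B(1) _ B(2)] by blast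
  then have "P = {B}" using B(1) by blast
  then show False using ne partition_onD1[OF part] unfolding one_part_def by simp
qed

lemma noncrossing_interval_block:
  assumes P: "noncrossing n P" and ne: "P \<noteq> one_part n" and n: "1 \<le> n"
  shows "\<exists>l s. {l+1..l+s} \<in> P \<and> 1 \<le> s \<and> l + s < n"
proof -
  have part: "partition_on {1..n} P" using noncrossing_partition_on[OF P] .
  obtain V0 where "V0 \<in> P" "n \<notin> V0" using exists_block_avoiding[OF part ne n] by blast
  then obtain V where V: "V \<in> P" "n \<notin> V"
    and min: "\<And>X. X \<in> P \<Longrightarrow> n \<notin> X \<Longrightarrow> Max V - Min V \<le> Max X - Min X"
    using ex_has_least_nat[of "\<lambda>V. V \<in> P \<and> n \<notin> V" V0 "\<lambda>V. Max V - Min V"] by blast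
  define a b where "a = Min V" and "b = Max V"
  have ab: "V = {a..b}" using block_eq_interval_if_min_span[OF P V min] unfolding a_def b_def .
  have "a \<in> V" "b \<in> V" "V \<subseteq> {1..n}"
    using ab partition_on_block_nonempty[OF part V(1)] partition_on_block_subset[OF part V(1)] by auto
  then have "a \<le> b" "1 \<le> a" "b < n" using ab V(2) by (auto simp: order.order_iff_strict)
  then have "{(a - 1) + 1..(a - 1) + (b - a + 1)} \<in> P" "(a - 1) + (b - a + 1) < n"
    using V(1) ab by (simp_all add: le_imp_diff_is_add)
  then show ?thesis by (intro exI[of _ "a - 1"] exI[of _ "b - a + 1"]) auto
qed

lemma inner_block_shift: "V \<in> inner l s P \<Longrightarrow> (\<lambda>j. j + l) ` V \<in> P"
proof -
  assume "V \<in> inner l s P"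
  then obtain U where U: "U \<in> P" "U \<subseteq> {l+1..l+s}" "V = (\<lambda>j. j - l) ` U"
    unfolding inner_def by blast
  have "(\<lambda>j. j + l) ` V = (\<lambda>j. j - l + l) ` U" unfolding U(3) image_image ..
  also have "\<dots> = U" using U(2) by (auto intro!: image_eqI)
  finally show ?thesis using U(1) by simp
qed

lemma inner_eq_one_part:
  assumes P: "partition_on {1..n} P" and W: "{l+1..l+s} \<in> P"
  shows "inner l s P = one_part s"
proof -
  have "{V\<in>P. V \<subseteq> {l+1..l+s}} = {{l+1..l+s}}"
    using W partition_on_block_eq[OF P _ W] partition_on_block_nonempty[OF P] by blast
  moreover have "(\<lambda>j. j - l) ` {l+1..l+s} = {1..s}"
    using bij_betw_imp_surj_on[OF bij_betw_minus_offset] .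
  ultimately show ?thesis unfolding inner_def one_part_def by simp
qed

lemma block_if_inner_eq_one_part: "inner l s P = one_part s \<Longrightarrow> {l+1..l+s} \<in> P"
  using inner_block_shift[of "{1..s}" l s P] unfolding one_part_def by (simp add: add.commute)

locale INC_interval_block =
  fixes n l s :: nat and \<chi> :: "nat \<Rightarrow> side" and PP :: "nat set set"
  assumes PP: "PP \<in> INC n \<chi>" and W: "{l+1..l+s} \<in> PP" and s: "1 \<le> s" and n: "l + s < n"
begin

abbreviation "\<chi>_in \<equiv> (\<lambda>j. \<chi> (j + l))"
abbreviation "\<chi>_out \<equiv> (\<lambda>j. \<chi> (shift_up l s j))"

lemma PP_partition: "partition_on {1..n} PP"
  using INC_partition_on[OF PP] .

lemma PP_splits: "splits l s PP"
  using splits_if_block[OF PP_partition W] .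

lemma outer_PP_INC: "outer l s PP \<in> INC (n-s) \<chi>_out"
  using noncrossing_outer[OF PP_partition PP_splits] INC_cond_outer[OF PP_partition PP_splits] PP n
  unfolding INC_iff by simp

lemma below_PP:
  assumes "z \<in> INC n \<chi>" "refines z PP"
  shows "partition_on {1..n} z" "splits l s z" "\<And>x y. same_block z x y \<Longrightarrow> same_block PP x y"
proof -
  show z: "partition_on {1..n} z" using INC_partition_on[OF assms(1)] .
  show r: "\<And>x y. same_block z x y \<Longrightarrow> same_block PP x y"
    using refines_iff_same_block[OF z PP_partition] assms(2) by blast
  show "splits l s z" using splits_if_refines[OF PP_partition W r] .
qed

lemma inner_outer_below_PP:
  assumes z: "z \<in> INC n \<chi>" "refines z PP"
  shows "inner l s z \<in> INC s \<chi>_in" "refines (inner l s z) (one_part s)"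
    and "outer l s z \<in> INC (n-s) \<chi>_out" "refines (outer l s z) (outer l s PP)"
proof -
  note below = below_PP[OF z] and nle = less_imp_le[OF n]
  show "inner l s z \<in> INC s \<chi>_in" "outer l s z \<in> INC (n-s) \<chi>_out"
    using noncrossing_inner[OF below(1,2) nle] INC_cond_inner[OF below(1,2) nle]
      noncrossing_outer[OF below(1,2) nle] INC_cond_outer[OF below(1,2) nle] z(1)
    unfolding INC_iff by simp_all
  show "refines (inner l s z) (one_part s)"
    using refines_one_part partition_on_inner[OF below(1,2) nle] by blast
  show "refines (outer l s z) (outer l s PP)"
    using z(2) refines_iff_inner_outer[OF below(1,2) PP_partition PP_splits nle] by blast
qed

lemma glue_below_PP:
  assumes T: "T \<in> INC s \<chi>_in" and R: "R \<in> INC (n-s) \<chi>_out" "refines R (outer l s PP)"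
  shows "glue l s T R \<in> INC n \<chi>" "refines (glue l s T R) PP"
proof -
  have nle: "l + s \<le> n" using n by simp
  have Tp: "partition_on {1..s} T" and Rp: "partition_on {1..n-s} R"
    using INC_partition_on T R by blast+
  have R_le: "same_block R x y \<Longrightarrow> same_block (outer l s PP) x y" for x y
    using refines_iff_same_block[OF Rp partition_on_outer[OF PP_partition PP_splits nle]] R(2) by blast
  show "glue l s T R \<in> INC n \<chi>"
    using noncrossing_glue[of s T n R l] INC_cond_glue[OF Tp _ Rp _ nle PP_partition _ W R_le]
      T R(1) PP nle unfolding INC_iff by blast
  have "refines (inner l s (glue l s T R)) (inner l s PP)"
    using inner_glue[OF Tp Rp nle] refines_one_part[OF Tp] inner_eq_one_part[OF PP_partition W] by simp
  moreover have "refines (outer l s (glue l s T R)) (outer l s PP)"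
    using outer_glue[OF Tp Rp nle] R(2) by simp
  ultimately show "refines (glue l s T R) PP"
    using refines_iff_inner_outer[OF partition_on_glue[OF Tp Rp nle] splits_glue[OF Tp Rp nle]
        PP_partition PP_splits nle] by blast
qed

lemma bij_betw_inner_outer:
  "bij_betw (\<lambda>z. (inner l s z, outer l s z)) {z\<in>INC n \<chi>. refines z PP}
     ({z\<in>INC s \<chi>_in. refines z (one_part s)} \<times> {z\<in>INC (n-s) \<chi>_out. refines z (outer l s PP)})"
proof (rule bij_betw_byWitness[where f' = "\<lambda>(T, R). glue l s T R"])
  have nle: "l + s \<le> n" using n by simp
  show "\<forall>z\<in>{z\<in>INC n \<chi>. refines z PP}. (case (inner l s z, outer l s z) of (T, R) \<Rightarrow> glue l s T R) = z"
    using glue_inner_outer[OF below_PP(1,2) nle] by auto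
  show "\<forall>w\<in>{z\<in>INC s \<chi>_in. refines z (one_part s)} \<times> {z\<in>INC (n-s) \<chi>_out. refines z (outer l s PP)}.
      (inner l s (case w of (T, R) \<Rightarrow> glue l s T R), outer l s (case w of (T, R) \<Rightarrow> glue l s T R)) = w"
    using inner_glue[OF _ _ nle] outer_glue[OF _ _ nle] INC_partition_on by fastforce
  show "(\<lambda>z. (inner l s z, outer l s z)) ` {z\<in>INC n \<chi>. refines z PP}
      \<subseteq> {z\<in>INC s \<chi>_in. refines z (one_part s)} \<times> {z\<in>INC (n-s) \<chi>_out. refines z (outer l s PP)}"
    using inner_outer_below_PP by blast
  show "(\<lambda>(T, R). glue l s T R) `
      ({z\<in>INC s \<chi>_in. refines z (one_part s)} \<times> {z\<in>INC (n-s) \<chi>_out. refines z (outer l s PP)})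
      \<subseteq> {z\<in>INC n \<chi>. refines z PP}"
    using glue_below_PP by auto
qed

lemma mu_INC_factor:
  assumes "z \<in> INC n \<chi>" "refines z PP"
  shows "mu_INC n \<chi> z PP =
    mu_INC s \<chi>_in (inner l s z) (one_part s) * mu_INC (n-s) \<chi>_out (outer l s z) (outer l s PP)"
  unfolding mu_INC_def
proof (rule mobius_product[OF finite_poset_INC finite_poset_INC finite_poset_INC PP
      one_part_INC[OF s] outer_PP_INC bij_betw_inner_outer _ _ _ assms])
  show "inner l s PP = one_part s" using inner_eq_one_part[OF PP_partition W] .
  show "refines x y \<longleftrightarrow> refines (inner l s x) (inner l s y) \<and> refines (outer l s x) (outer l s y)"
    if "x \<in> INC n \<chi>" "refines x PP" "y \<in> INC n \<chi>" "refines y PP" for x y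
    using refines_iff_inner_outer[OF below_PP(1,2)[OF that(1,2)] below_PP(1,2)[OF that(3,4)]] n by simp
qed simp

end

section \<open>Contracting an interval block\<close>

lemma shift_down_block_in_outer:
  "V \<in> P \<Longrightarrow> V \<inter> {l+1..l+s} = {} \<Longrightarrow> shift_down l s ` V \<in> outer l s P"
  unfolding outer_def by blast

lemma shift_down_interval_right:
  assumes "l1 + s1 \<le> l2"
  shows "shift_down l1 s1 ` {l2+1..l2+s2} = {(l2-s1)+1..(l2-s1)+s2}"
proof (intro equalityI subsetI)
  fix x assume "x \<in> {(l2-s1)+1..(l2-s1)+s2}"
  then have "x + s1 \<in> {l2+1..l2+s2}" "shift_down l1 s1 (x + s1) = x"
    using assms unfolding shift_down_def by auto
  then show "x \<in> shift_down l1 s1 ` {l2+1..l2+s2}" by (metis image_eqI)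
qed (use assms in \<open>auto simp: shift_down_def\<close>)

lemma shift_down_interval_left:
  "l1 + s1 \<le> l2 \<Longrightarrow> shift_down l2 s2 ` {l1+1..l1+s1} = {l1+1..l1+s1}"
  unfolding shift_down_def by (auto simp: image_iff)

lemma outer_outer_eqI:
  assumes P: "partition_on {1..n} P"
    and sp1: "splits l1 s1 P" "splits l1' s1' (outer l1 s1 P)" and n1: "l1 + s1 \<le> n" "l1' + s1' \<le> n - s1"
    and sp2: "splits l2 s2 P" "splits l2' s2' (outer l2 s2 P)" and n2: "l2 + s2 \<le> n" "l2' + s2' \<le> n - s2"
    and len: "n - s1 - s1' = n - s2 - s2'"
    and shifts: "\<And>x. shift_up l1 s1 (shift_up l1' s1' x) = shift_up l2 s2 (shift_up l2' s2' x)"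
  shows "outer l1' s1' (outer l1 s1 P) = outer l2' s2' (outer l2 s2 P)"
proof -
  have P1: "partition_on {1..n-s1} (outer l1 s1 P)" using partition_on_outer[OF P sp1(1) n1(1)] .
  have P2: "partition_on {1..n-s2} (outer l2 s2 P)" using partition_on_outer[OF P sp2(1) n2(1)] .
  show ?thesis
  proof (rule partition_on_eqI[OF partition_on_outer[OF P1 sp1(2) n1(2)]])
    show "partition_on {1..n-s1-s1'} (outer l2' s2' (outer l2 s2 P))"
      using partition_on_outer[OF P2 sp2(2) n2(2)] len by simp
    fix x y assume xy: "x \<in> {1..n-s1-s1'}" "y \<in> {1..n-s1-s1'}"
    then show "same_block (outer l1' s1' (outer l1 s1 P)) x y \<longleftrightarrow> same_block (outer l2' s2' (outer l2 s2 P)) x y"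
      using shift_up_in_range[OF _ n1(2)] shift_up_in_range[OF _ n2(2)] len shifts
      by (simp add: same_block_outer_iff[OF P1 sp1(2) n1(2)] same_block_outer_iff[OF P2 sp2(2) n2(2)]
          same_block_outer_iff[OF P sp1(1) n1(1)] same_block_outer_iff[OF P sp2(1) n2(1)])
  qed
qed

lemma interval_blocks_eq_or_disjoint:
  fixes la sa lb sb :: nat
  assumes P: "partition_on A P" and blocks: "{la+1..la+sa} \<in> P" "{lb+1..lb+sb} \<in> P"
    and s: "1 \<le> sa" "1 \<le> sb" and le: "la \<le> lb"
  shows "(la = lb \<and> sa = sb) \<or> la + sa \<le> lb"
proof (rule disjCI)
  assume "\<not> la + sa \<le> lb"
  then have "lb + 1 \<in> {la+1..la+sa}" "lb + 1 \<in> {lb+1..lb+sb}" using le s by auto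
  then have eq: "{la+1..la+sa} = {lb+1..lb+sb}" using partition_on_block_eq[OF P blocks] by blast
  have "la + 1 \<in> {la+1..la+sa}" "la + sa \<in> {la+1..la+sa}" "lb + sb \<in> {lb+1..lb+sb}" using s by auto
  then have "la + 1 \<in> {lb+1..lb+sb}" "la + sa \<in> {lb+1..lb+sb}" "lb + sb \<in> {la+1..la+sa}"
    unfolding eq by blast+
  then show "la = lb \<and> sa = sb" using le by auto
qed

lemma outer_outer_commute:
  assumes P: "partition_on {1..n} P" and W1: "{l1+1..l1+s1} \<in> P" and W2: "{l2+1..l2+s2} \<in> P"
    and ll: "l1 + s1 \<le> l2" and n: "l2 + s2 \<le> n"
  shows "{(l2-s1)+1..(l2-s1)+s2} \<in> outer l1 s1 P"
    and "{l1+1..l1+s1} \<in> outer l2 s2 P"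
    and "outer (l2-s1) s2 (outer l1 s1 P) = outer l1 s1 (outer l2 s2 P)"
proof -
  have disj: "{l2+1..l2+s2} \<inter> {l1+1..l1+s1} = {}" "{l1+1..l1+s1} \<inter> {l2+1..l2+s2} = {}"
    using ll by auto
  show W2': "{(l2-s1)+1..(l2-s1)+s2} \<in> outer l1 s1 P"
    using shift_down_block_in_outer[OF W2 disj(1)] shift_down_interval_right[OF ll] by simp
  show W1': "{l1+1..l1+s1} \<in> outer l2 s2 P"
    using shift_down_block_in_outer[OF W1 disj(2)] shift_down_interval_left[OF ll] by simp
  show "outer (l2-s1) s2 (outer l1 s1 P) = outer l1 s1 (outer l2 s2 P)"
  proof (rule outer_outer_eqI[OF P])
    show "splits l1 s1 P" "splits l2 s2 P" using splits_if_block P W1 W2 by blast+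
    show "splits (l2-s1) s2 (outer l1 s1 P)"
      using splits_if_block[OF partition_on_outer[OF P _ _] W2'] \<open>splits l1 s1 P\<close> ll n by simp
    show "splits l1 s1 (outer l2 s2 P)"
      using splits_if_block[OF partition_on_outer[OF P _ _] W1'] \<open>splits l2 s2 P\<close> n by simp
  qed (use ll n in \<open>auto simp: shift_up_def\<close>)
qed

lemma splits_outer_inside:
  assumes sp: "splits l s P" and ut: "u + t < s"
  shows "splits l (s - t) (outer (l + u) t P)"
  unfolding splits_def outer_def
proof
  fix V' assume "V' \<in> (\<lambda>V. shift_down (l + u) t ` V) ` {V \<in> P. V \<inter> {l + u + 1..l + u + t} = {}}"
  then obtain V where V: "V \<in> P" "V \<inter> {l+u+1..l+u+t} = {}" "V' = shift_down (l + u) t ` V" by blast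
  have "V \<subseteq> {l+1..l+s} \<or> V \<inter> {l+1..l+s} = {}" using sp V(1) unfolding splits_def by blast
  then show "V' \<subseteq> {l+1..l+(s-t)} \<or> V' \<inter> {l+1..l+(s-t)} = {}"
  proof
    assume "V \<subseteq> {l+1..l+s}"
    then have "V' \<subseteq> {l+1..l+(s-t)}" using V(2,3) ut unfolding shift_down_def by (auto simp: subset_iff)
    then show ?thesis by blast
  next
    assume "V \<inter> {l+1..l+s} = {}"
    then have "V' \<inter> {l+1..l+(s-t)} = {}" using V(3) ut unfolding shift_down_def by (auto simp: disjoint_iff)
    then show ?thesis by blast
  qed
qed

lemma outer_zero: "outer l 0 Q = Q"
proof -
  have "shift_down l 0 = (\<lambda>j. j)" by (rule ext) (simp add: shift_down_def)
  then show ?thesis by (simp add: outer_def)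
qed

context
  fixes n l s u t :: nat and P :: "nat set set"
  assumes P: "partition_on {1..n} P" and sp: "splits l s P" and n: "l + s \<le> n"
    and U: "{l+u+1..l+u+t} \<in> P" and ut: "u + t < s"
begin

lemma outer_outer_inside: "outer l (s - t) (outer (l + u) t P) = outer l s P"
proof -
  have "outer l (s - t) (outer (l + u) t P) = outer 0 0 (outer l s P)"
  proof (rule outer_outer_eqI[OF P _ _ _ _ sp])
    show "splits (l + u) t P" using splits_if_block[OF P U] .
    show "splits l (s - t) (outer (l + u) t P)" using splits_outer_inside[OF sp ut] .
    show "splits 0 0 (outer l s P)" unfolding splits_def by simp
  qed (use ut n in \<open>auto simp: shift_up_def\<close>)
  then show ?thesis by (simp add: outer_zero)
qed

lemma interval_in_inner: "{u+1..u+t} \<in> inner l s P"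
  unfolding inner_def
proof (rule image_eqI)
  have eq: "{l+u+1..l+u+t} = (\<lambda>j. j + l) ` {u+1..u+t}" by simp
  show "{u+1..u+t} = (\<lambda>j. j - l) ` {l+u+1..l+u+t}" unfolding eq image_image by simp
  show "{l+u+1..l+u+t} \<in> {V\<in>P. V \<subseteq> {l+1..l+s}}" using U ut by simp
qed

lemma inner_outer_inside: "inner l (s - t) (outer (l + u) t P) = outer u t (inner l s P)"
proof -
  have spU: "splits (l + u) t P" and nU: "l + u + t \<le> n" using splits_if_block[OF P U] ut n by auto
  have P1: "partition_on {1..n-t} (outer (l + u) t P)" using partition_on_outer[OF P spU nU] .
  have sp1: "splits l (s - t) (outer (l + u) t P)" using splits_outer_inside[OF sp ut] .
  have n1: "l + (s - t) \<le> n - t" using n ut by simp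
  have Pi: "partition_on {1..s} (inner l s P)" using partition_on_inner[OF P sp n] .
  have spi: "splits u t (inner l s P)" using splits_if_block[OF Pi interval_in_inner] .
  have ni: "u + t \<le> s" using ut by simp
  show ?thesis
  proof (rule partition_on_eqI[OF partition_on_inner[OF P1 sp1 n1] partition_on_outer[OF Pi spi ni]])
    fix x y assume xy: "x \<in> {1..s-t}" "y \<in> {1..s-t}"
    have "shift_up (l + u) t (z + l) = shift_up u t z + l" for z unfolding shift_up_def by auto
    moreover have "x + l \<le> n - t" "y + l \<le> n - t" using xy n1 by auto
    ultimately show "same_block (inner l (s - t) (outer (l + u) t P)) x y \<longleftrightarrow>
        same_block (outer u t (inner l s P)) x y"
      using xy n1 shift_up_in_range[OF _ ni] ut
      by (simp add: same_block_inner_iff[OF P1 sp1 n1] same_block_outer_iff[OF P spU nU]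
          same_block_outer_iff[OF Pi spi ni] same_block_inner_iff[OF P sp n])
  qed
qed

end

section \<open>Nested expectations\<close>

definition contract :: "('a::ring_1 \<Rightarrow> 'a) \<Rightarrow> nat \<Rightarrow> nat \<Rightarrow> 'a list \<Rightarrow> 'a list" where
  "contract E l s xs = take l xs @ [E (prod_list (take s (drop l xs))) * xs ! (l + s)] @ drop (l + s + 1) xs"

lemma contract_append:
  "length A = l \<Longrightarrow> length W = s \<Longrightarrow> contract E l s (A @ W @ x # C) = A @ E (prod_list W) * x # C"
  unfolding contract_def by (simp add: nth_append)

lemma length_contract: "l + s < length xs \<Longrightarrow> length (contract E l s xs) = length xs - s"
  unfolding contract_def by simp

lemma split_list_at:
  assumes "l + s < length xs"
  obtains A W x C where "xs = A @ W @ x # C" "length A = l" "length W = s"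
proof
  have "drop s (drop l xs) = xs ! (l + s) # drop (l + s + 1) xs"
    using assms by (simp add: Cons_nth_drop_Suc add.commute)
  then show "xs = take l xs @ take s (drop l xs) @ xs ! (l + s) # drop (l + s + 1) xs"
    by (metis append_take_drop_id)
qed (use assms in auto)

lemma contract_list_update:
  assumes A: "length A = l" and V: "length V = s"
  shows "j < l \<Longrightarrow>
      contract E l s ((A @ V @ x # C)[j := z]) = (A @ E (prod_list V) * x # C)[j := z]"
    and "l \<le> j \<Longrightarrow> j < l + s \<Longrightarrow> contract E l s ((A @ V @ x # C)[j := z])
      = (A @ E (prod_list V) * x # C)[l := E (prod_list (V[j - l := z])) * x]"
    and "contract E l s ((A @ V @ x # C)[l + s := z]) = (A @ E (prod_list V) * x # C)[l := E (prod_list V) * z]"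
    and "l + s < j \<Longrightarrow>
      contract E l s ((A @ V @ x # C)[j := z]) = (A @ E (prod_list V) * x # C)[j - s := z]"
proof -
  show "j < l \<Longrightarrow>
      contract E l s ((A @ V @ x # C)[j := z]) = (A @ E (prod_list V) * x # C)[j := z]"
    using A V by (simp add: list_update_append contract_append)
  show "contract E l s ((A @ V @ x # C)[l + s := z]) = (A @ E (prod_list V) * x # C)[l := E (prod_list V) * z]"
    using A V by (simp add: list_update_append contract_append)
  assume "l \<le> j" "j < l + s"
  then have "\<not> j < length A" "j - length A < length V" using A V by auto
  then show "contract E l s ((A @ V @ x # C)[j := z])
      = (A @ E (prod_list V) * x # C)[l := E (prod_list (V[j - l := z])) * x]"
    using A V by (simp add: list_update_append contract_append)
next
  assume "l + s < j"
  then obtain k where j: "j = l + s + Suc k" using less_imp_Suc_add by fastforce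
  have "(A @ V @ x # C)[j := z] = A @ V @ x # C[k := z]"
    using A V unfolding j by (simp add: list_update_append)
  moreover have "(A @ E (prod_list V) * x # C)[j - s := z] = A @ E (prod_list V) * x # C[k := z]"
    using A unfolding j by (simp add: list_update_append)
  ultimately show "contract E l s ((A @ V @ x # C)[j := z]) = (A @ E (prod_list V) * x # C)[j - s := z]"
    using A V by (simp add: contract_append)
qed

lemma outer_eq_image_Diff:
  assumes "partition_on A P" "{l+1..l+s} \<in> P" "1 \<le> s"
  shows "(\<lambda>V. shift_down l s ` V) ` (P - {{l+1..l+s}}) = outer l s P"
proof -
  have "V \<inter> {l+1..l+s} = {} \<longleftrightarrow> V \<noteq> {l+1..l+s}" if V: "V \<in> P" for V
  proof
    show "V \<inter> {l+1..l+s} = {} \<Longrightarrow> V \<noteq> {l+1..l+s}" using assms(3) by auto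
    show "V \<noteq> {l+1..l+s} \<Longrightarrow> V \<inter> {l+1..l+s} = {}"
      using partition_on_block_eq[OF assms(1) V assms(2)] by blast
  qed
  then have "P - {{l+1..l+s}} = {V\<in>P. V \<inter> {l+1..l+s} = {}}" by blast
  then show ?thesis unfolding outer_def by simp
qed

lemma nested_rel_contract:
  assumes "partition_on {1..length xs} P" "{l+1..l+s} \<in> P" "1 \<le> s" "l + s < length xs"
    and "nested_rel E (outer l s P) (contract E l s xs) v"
  shows "nested_rel E P xs v"
  using nested_rel.step[of l s P xs E v] assms outer_eq_image_Diff[OF assms(1-3)]
  unfolding contract_def by simp

lemma nested_rel_contractE:
  assumes "nested_rel E P xs v" "partition_on {1..length xs} P"
  obtains "P = one_part (length xs)" "v = E (prod_list xs)"
    | l s where "{l+1..l+s} \<in> P" "1 \<le> s" "l + s < length xs"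
        "nested_rel E (outer l s P) (contract E l s xs) v"
  using assms(1)
proof cases
  case full then show ?thesis using that(1) unfolding one_part_def by blast
next
  case (step l s)
  then show ?thesis
    using that(2) outer_eq_image_Diff[OF assms(2) step(1,2)] unfolding contract_def by metis
qed

lemma one_part_no_proper_interval:
  assumes "{l+1..l+s} \<in> one_part n" "l + s < n"
  shows False
proof -
  have "{l+1..l+s} = {1..n}" using assms(1) unfolding one_part_def by simp
  moreover have "n \<in> {1..n}" "n \<notin> {l+1..l+s}" using assms(2) by auto
  ultimately show False by blast
qed

lemma noncrossing_outer_contract:
  assumes "noncrossing (length xs) P" "{l+1..l+s} \<in> P" "l + s < length xs"
  shows "noncrossing (length (contract E l s xs)) (outer l s P)"
  using noncrossing_outer[OF noncrossing_partition_on[OF assms(1)]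
      splits_if_block[OF noncrossing_partition_on[OF assms(1)] assms(2)]] assms
  by (simp add: length_contract)

lemma nested_rel_exists: "noncrossing (length xs) P \<Longrightarrow> xs \<noteq> [] \<Longrightarrow> \<exists>v. nested_rel E P xs v"
proof (induction "length xs" arbitrary: xs P rule: less_induct)
  case less
  show ?case
  proof (cases "P = one_part (length xs)")
    case True
    then show ?thesis using nested_rel.full[OF less.prems(2), of E] unfolding one_part_def by blast
  next
    case False
    obtain l s where ls: "{l+1..l+s} \<in> P" "1 \<le> s" "l + s < length xs"
      using noncrossing_interval_block[OF less.prems(1) False] less.prems(2) by (cases xs) auto
    have len: "length (contract E l s xs) = length xs - s" using length_contract[OF ls(3)] .
    then have "length (contract E l s xs) < length xs" "contract E l s xs \<noteq> []"
      using ls(2,3) by auto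
    then obtain v where "nested_rel E (outer l s P) (contract E l s xs) v"
      using less.hyps noncrossing_outer_contract[OF less.prems(1) ls(1,3)] by blast
    then show ?thesis
      using nested_rel_contract[OF noncrossing_partition_on[OF less.prems(1)] ls] by blast
  qed
qed

lemma nested_rel_range: "nested_rel E P xs v \<Longrightarrow> v \<in> range E"
  by (induction rule: nested_rel.induct) auto

lemma additive_comp: "additive f \<Longrightarrow> additive g \<Longrightarrow> additive (\<lambda>z. f (g z))"
  unfolding additive_def by simp

lemma additive_mult: "additive (\<lambda>z. a * z * (b :: 'a::ring))"
  unfolding additive_def by (simp add: distrib_left distrib_right)

lemma additive_of_int_mult:
  fixes f :: "'a::ring_1 \<Rightarrow> 'b::ring_1"
  assumes "additive f"
  shows "f (of_int c * x) = of_int c * f x"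
proof -
  have nat: "f (of_nat m * x) = of_nat m * f x" for m
    by (induction m) (simp_all add: additive.zero[OF assms] additive.add[OF assms] distrib_right)
  show ?thesis
  proof (cases c rule: int_cases)
    case (neg m)
    then have "of_int c * x = - (of_nat (Suc m) * x)" and "of_int c * f x = - (of_nat (Suc m) * f x)"
      by (simp_all only: of_int_minus of_int_of_nat_eq mult_minus_left)
    then show ?thesis using nat[of "Suc m"] additive.minus[OF assms] by simp
  qed (simp add: nat)
qed

lemma prod_list_update:
  "j < length ys \<Longrightarrow> prod_list (ys[j := z]) = prod_list (take j ys) * z * prod_list (drop (Suc j) ys)"
  by (simp add: upd_conv_take_nth_drop mult.assoc)

locale B_expectation =
  fixes E :: "'a::ring_1 \<Rightarrow> 'a" and Bs :: "'a set"
  assumes E_add: "E (x + y) = E x + E y"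
    and E_in_B: "E x \<in> Bs"
    and E_left_B: "b \<in> Bs \<Longrightarrow> E (b * x) = b * E x"
    and of_int_in_B: "of_int c \<in> Bs"
    and B_add: "x \<in> Bs \<Longrightarrow> y \<in> Bs \<Longrightarrow> x + y \<in> Bs"
    and B_mult: "x \<in> Bs \<Longrightarrow> y \<in> Bs \<Longrightarrow> x * y \<in> Bs"
begin

lemma additive_E: "additive E"
  by unfold_locales (rule E_add)

lemma contract_commute:
  assumes ll: "l1 + s1 \<le> l2" and s2: "1 \<le> s2" and n: "l2 + s2 < length xs"
  shows "contract E (l2 - s1) s2 (contract E l1 s1 xs) = contract E l1 s1 (contract E l2 s2 xs)"
proof -
  have "l1 + s1 < length xs" using ll n by simp
  then obtain A W1 x1 C1 where xs: "xs = A @ W1 @ x1 # C1" and A: "length A = l1" and W1: "length W1 = s1"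
    by (rule split_list_at)
  have "(l2 - l1 - s1) + s2 < length (x1 # C1)" using ll n xs A W1 by auto
  then obtain M W2 x2 C where C1: "x1 # C1 = M @ W2 @ x2 # C"
    and M: "length M = l2 - l1 - s1" and W2: "length W2 = s2"
    using split_list_at by blast
  let ?e1 = "E (prod_list W1)" and ?e2 = "E (prod_list W2)"
  show ?thesis
  proof (cases M)
    case Nil
    then obtain W2' where W2': "W2 = x1 # W2'" "C1 = W2' @ x2 # C"
      using C1 s2 W2 by (cases W2) auto
    have l2: "l2 - s1 = l1" "l2 = l1 + s1" using M Nil ll by simp_all
    have "contract E (l2 - s1) s2 (contract E l1 s1 xs)
        = contract E l1 s2 (A @ (?e1 * x1 # W2') @ x2 # C)"
      using contract_append[OF A W1] xs W2' l2 by simp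
    also have "\<dots> = A @ E (prod_list (?e1 * x1 # W2')) * x2 # C"
      by (rule contract_append[OF A]) (use W2 W2' in simp)
    also have "E (prod_list (?e1 * x1 # W2')) = ?e1 * ?e2"
      using E_left_B[OF E_in_B] W2'(1) by (simp add: mult.assoc)
    also have "A @ (?e1 * ?e2) * x2 # C = contract E l1 s1 (A @ W1 @ ?e2 * x2 # C)"
      using contract_append[OF A W1] by (simp add: mult.assoc)
    also have "A @ W1 @ ?e2 * x2 # C = contract E l2 s2 ((A @ W1) @ W2 @ x2 # C)"
      using contract_append[OF _ W2, of "A @ W1" l2 E x2 C] A W1 l2 by simp
    also have "(A @ W1) @ W2 @ x2 # C = xs" using xs W2' by simp
    finally show ?thesis .
  next
    case (Cons m M')
    then have xs': "xs = A @ W1 @ x1 # M' @ W2 @ x2 # C" using xs C1 by auto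
    have "contract E (l2 - s1) s2 (contract E l1 s1 xs)
        = contract E (l2 - s1) s2 ((A @ ?e1 * x1 # M') @ W2 @ x2 # C)"
      using contract_append[OF A W1] xs' by simp
    also have "\<dots> = (A @ ?e1 * x1 # M') @ ?e2 * x2 # C"
      by (rule contract_append[OF _ W2]) (use A M Cons ll in simp)
    also have "\<dots> = contract E l1 s1 (A @ W1 @ x1 # M' @ ?e2 * x2 # C)"
      using contract_append[OF A W1] by simp
    also have "A @ W1 @ x1 # M' @ ?e2 * x2 # C = contract E l2 s2 ((A @ W1 @ x1 # M') @ W2 @ x2 # C)"
      using contract_append[OF _ W2, of "A @ W1 @ x1 # M'" l2 E x2 C] A W1 M Cons ll by simp
    finally show ?thesis using xs' by simp
  qed
qed

lemma nested_rel_diamond: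
  assumes P: "noncrossing (length xs) P"
    and Wa: "{la+1..la+sa} \<in> P" "1 \<le> sa" and Wb: "{lb+1..lb+sb} \<in> P" "1 \<le> sb"
    and ll: "la + sa \<le> lb" and n: "lb + sb < length xs"
  obtains v where "nested_rel E (outer la sa P) (contract E la sa xs) v"
    and "nested_rel E (outer lb sb P) (contract E lb sb xs) v"
proof -
  have part: "partition_on {1..length xs} P" using noncrossing_partition_on[OF P] .
  note commute = outer_outer_commute[OF part Wa(1) Wb(1) ll less_imp_le[OF n]]
  have na: "la + sa < length xs" using ll n Wb(2) by simp
  define xs1 where "xs1 = contract E la sa xs"
  have len1: "length xs1 = length xs - sa" using length_contract[OF na] unfolding xs1_def .
  have n1: "(lb - sa) + sb < length xs1" using len1 ll n by simp
  have P1: "noncrossing (length xs1) (outer la sa P)"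
    using noncrossing_outer_contract[OF P Wa(1) na] unfolding xs1_def .
  have "contract E (lb - sa) sb xs1 \<noteq> []" using length_contract[OF n1, where E = E] len1 ll n by auto
  then obtain v where v: "nested_rel E (outer (lb - sa) sb (outer la sa P)) (contract E (lb - sa) sb xs1) v"
    using nested_rel_exists[OF noncrossing_outer_contract[OF P1 commute(1) n1]] by blast
  show ?thesis
  proof (rule that)
    show "nested_rel E (outer la sa P) (contract E la sa xs) v"
      using nested_rel_contract[OF noncrossing_partition_on[OF P1] commute(1) Wb(2) n1 v]
      unfolding xs1_def .
    have "noncrossing (length (contract E lb sb xs)) (outer lb sb P)"
      using noncrossing_outer_contract[OF P Wb(1) n] .
    moreover have "la + sa < length (contract E lb sb xs)" using length_contract[OF n] ll n by simp
    ultimately show "nested_rel E (outer lb sb P) (contract E lb sb xs) v"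
      using nested_rel_contract[OF noncrossing_partition_on commute(2) Wa(2)] v commute(3)
        contract_commute[OF ll Wb(2) n] unfolding xs1_def by simp
  qed
qed

lemma nested_rel_unique:
  "noncrossing (length xs) P \<Longrightarrow> nested_rel E P xs v1 \<Longrightarrow> nested_rel E P xs v2 \<Longrightarrow> v1 = v2"
proof (induction "length xs" arbitrary: xs P v1 v2 rule: less_induct)
  case less
  have part: "partition_on {1..length xs} P" using noncrossing_partition_on[OF less.prems(1)] .
  have IH: "va = vb"
    if "{l+1..l+s} \<in> P" "1 \<le> s" "l + s < length xs"
      "nested_rel E (outer l s P) (contract E l s xs) va" "nested_rel E (outer l s P) (contract E l s xs) vb"
    for l s va vb
    using less.hyps[OF _ noncrossing_outer_contract[OF less.prems(1) that(1,3)] that(4,5)]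
      length_contract[OF that(3)] that(2,3) by simp
  have two_blocks: "va = vb"
    if a: "{la+1..la+sa} \<in> P" "1 \<le> sa" "la + sa < length xs"
      "nested_rel E (outer la sa P) (contract E la sa xs) va"
    and b: "{lb+1..lb+sb} \<in> P" "1 \<le> sb" "lb + sb < length xs"
      "nested_rel E (outer lb sb P) (contract E lb sb xs) vb"
    and "la \<le> lb"
    for la sa va lb sb vb
    using interval_blocks_eq_or_disjoint[OF part a(1) b(1) a(2) b(2) \<open>la \<le> lb\<close>]
  proof
    assume "la = lb \<and> sa = sb"
    then show ?thesis using IH[OF a] b by simp
  next
    assume "la + sa \<le> lb"
    then obtain v where "nested_rel E (outer la sa P) (contract E la sa xs) v"
      "nested_rel E (outer lb sb P) (contract E lb sb xs) v"
      using nested_rel_diamond[OF less.prems(1) a(1,2) b(1,2) _ b(3)] by blast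
    then show ?thesis using IH[OF a(1-4)] IH[OF b(1-4)] by simp
  qed
  show ?case
  proof (cases rule: nested_rel_contractE[OF less.prems(2) part])
    case full: 1
    show ?thesis
      by (cases rule: nested_rel_contractE[OF less.prems(3) part])
        (use full one_part_no_proper_interval in auto)
  next
    case a: (2 la sa)
    show ?thesis
    proof (cases rule: nested_rel_contractE[OF less.prems(3) part])
      case 1
      then show ?thesis using a one_part_no_proper_interval by blast
    next
      case b: (2 lb sb)
      show ?thesis
        by (cases "la \<le> lb") (use two_blocks[OF a b] two_blocks[OF b a] in auto)
    qed
  qed
qed

lemma Phi_eqI: "noncrossing (length xs) P \<Longrightarrow> nested_rel E P xs v \<Longrightarrow> Phi E P xs = v"
  unfolding Phi_def using nested_rel_unique by blast

lemma Phi_one_part: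
  assumes "xs \<noteq> []"
  shows "Phi E (one_part (length xs)) xs = E (prod_list xs)"
proof (rule Phi_eqI)
  show "noncrossing (length xs) (one_part (length xs))"
    using one_part_INC[of "length xs"] assms unfolding INC_iff by (cases xs) auto
  show "nested_rel E (one_part (length xs)) xs (E (prod_list xs))"
    using nested_rel.full[OF assms] unfolding one_part_def .
qed

lemma Phi_contract:
  assumes P: "noncrossing (length xs) P" and W: "{l+1..l+s} \<in> P" "1 \<le> s" and n: "l + s < length xs"
  shows "Phi E P xs = Phi E (outer l s P) (contract E l s xs)"
proof -
  have P': "noncrossing (length (contract E l s xs)) (outer l s P)"
    using noncrossing_outer_contract[OF P W(1) n] .
  moreover have "contract E l s xs \<noteq> []" using length_contract[OF n, where E = E] n by auto
  ultimately obtain v where v: "nested_rel E (outer l s P) (contract E l s xs) v"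
    using nested_rel_exists by blast
  then have "nested_rel E P xs v"
    using nested_rel_contract[OF noncrossing_partition_on[OF P] W n] by blast
  then show ?thesis using Phi_eqI[OF P] Phi_eqI[OF P' v] by simp
qed

lemma Phi_in_B:
  assumes "noncrossing (length xs) P" "xs \<noteq> []"
  shows "Phi E P xs \<in> Bs"
proof -
  obtain v where "nested_rel E P xs v" using nested_rel_exists[OF assms] by blast
  then show ?thesis using Phi_eqI[OF assms(1)] nested_rel_range E_in_B by fastforce
qed

lemma additive_E_prod_list_update: "j < length ys \<Longrightarrow> additive (\<lambda>z. E (prod_list (ys[j := z])))"
  unfolding prod_list_update by (rule additive_comp[OF additive_E additive_mult])

lemma additive_Phi_update:
  "noncrossing (length ys) P \<Longrightarrow> j < length ys \<Longrightarrow> additive (\<lambda>z. Phi E P (ys[j := z]))"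
proof (induction "length ys" arbitrary: ys P j rule: less_induct)
  case less
  have ne: "ys \<noteq> []" using less.prems(2) by auto
  show ?case
  proof (cases "P = one_part (length ys)")
    case True
    then show ?thesis
      using Phi_one_part[of "ys[j := _]"] ne additive_E_prod_list_update[OF less.prems(2)] by simp
  next
    case False
    obtain l s where W: "{l+1..l+s} \<in> P" "1 \<le> s" "l + s < length ys"
      using noncrossing_interval_block[OF less.prems(1) False] ne by (cases ys) auto
    then obtain A V x C where ys: "ys = A @ V @ x # C" and A: "length A = l" and V: "length V = s"
      using split_list_at by blast
    define ys' where "ys' = A @ E (prod_list V) * x # C"
    have P': "noncrossing (length ys') (outer l s P)"
      using noncrossing_outer_contract[OF less.prems(1) W(1,3)] contract_append[OF A V] ys
      unfolding ys'_def by simp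
    have IH: "additive (\<lambda>z. Phi E (outer l s P) (ys'[j' := z]))" if "j' < length ys'" for j'
      using less.hyps[OF _ P' that] W(2) V ys unfolding ys'_def by simp
    have step: "Phi E P (ys[j := z]) = Phi E (outer l s P) (contract E l s (ys[j := z]))" for z
      using Phi_contract[of "ys[j := z]" P l s] less.prems(1) W by simp
    note contract_update = contract_list_update[OF A V, where E = E and x = x and C = C, folded ys ys'_def]
    consider "j < l" | "l \<le> j" "j < l + s" | "j = l + s" | "l + s < j" by linarith
    then show ?thesis
    proof cases
      case 1
      then show ?thesis using step contract_update(1) IH[of j] A unfolding ys'_def by simp
    next
      case 2
      then have "additive (\<lambda>z. E (prod_list (V[j - l := z])) * x)"
        using additive_comp[OF additive_mult[of 1 x] additive_E_prod_list_update] A V by simp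
      then show ?thesis
        using 2 step contract_update(2) additive_comp[OF IH[of l]] A unfolding ys'_def by simp
    next
      case 3
      then show ?thesis
        using step contract_update(3) additive_comp[OF IH[of l] additive_mult[of "E (prod_list V)" 1]] A
        unfolding ys'_def by simp
    next
      case 4
      then have "j - s < length ys'" using less.prems(2) V unfolding ys ys'_def by simp
      then show ?thesis using 4 step contract_update(4) IH by simp
    qed
  qed
qed

lemma additive_Phi_slot:
  assumes "noncrossing (length (A @ x # C)) P"
  shows "additive (\<lambda>b. Phi E P (A @ b * x # C))"
proof -
  have "A @ b * x # C = (A @ 0 # C)[length A := b * x]" for b by simp
  moreover have "additive (\<lambda>z. Phi E P ((A @ 0 # C)[length A := z]))"
    using additive_Phi_update[of "A @ 0 # C" P "length A"] assms by simp
  ultimately show ?thesis using additive_comp[OF _ additive_mult[of 1 x]] by simp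
qed

lemma Phi_decompose:
  assumes "noncrossing (length (A @ W @ x # C)) P" "splits (length A) (length W) P" "W \<noteq> []"
  shows "Phi E P (A @ W @ x # C) =
    Phi E (outer (length A) (length W) P) (A @ Phi E (inner (length A) (length W) P) W * x # C)"
  using assms
proof (induction "length W" arbitrary: P W rule: less_induct)
  case less
  define l s where "l = length A" and "s = length W"
  have part: "partition_on {1..length (A @ W @ x # C)} P" using noncrossing_partition_on[OF less.prems(1)] .
  have sp: "splits l s P" and n: "l + s \<le> length (A @ W @ x # C)" and s: "1 \<le> s"
    using less.prems(2,3) unfolding l_def s_def by (auto simp: Suc_le_eq)
  have inner_nc: "noncrossing s (inner l s P)" using noncrossing_inner[OF part sp n less.prems(1)] .
  show ?case
  proof (cases "{l+1..l+s} \<in> P")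
    case True
    then have "Phi E (inner l s P) W = E (prod_list W)"
      using inner_eq_one_part[OF part True] Phi_one_part[OF less.prems(3)] unfolding s_def by simp
    then show ?thesis
      using Phi_contract[OF less.prems(1) True s] contract_append[of A l W s E x C] n
      unfolding l_def s_def by simp
  next
    case False
    then have "inner l s P \<noteq> one_part s" using block_if_inner_eq_one_part by blast
    then obtain u t where ut: "{u+1..u+t} \<in> inner l s P" "1 \<le> t" "u + t < s"
      using noncrossing_interval_block[OF inner_nc] s by blast
    have U: "{l+u+1..l+u+t} \<in> P" using inner_block_shift[OF ut(1)] by (simp add: ac_simps)
    obtain W1 V y W2 where W: "W = W1 @ V @ y # W2" and W1: "length W1 = u" and V: "length V = t"
      using split_list_at[of u t W] ut(3) unfolding s_def by blast
    define W' where "W' = W1 @ E (prod_list V) * y # W2"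
    have len': "length W' = s - t" "length W' < length W" using W W1 V ut unfolding W'_def s_def by auto
    have contracted: "contract E (l + u) t (A @ W @ x # C) = A @ W' @ x # C"
      using contract_append[of "A @ W1" "l + u" V t E y "W2 @ x # C"] W W1 V
      unfolding W'_def l_def by simp
    have nU: "l + u + t < length (A @ W @ x # C)" using ut n by simp
    have P1: "noncrossing (length (A @ W' @ x # C)) (outer (l + u) t P)"
      using noncrossing_outer_contract[OF less.prems(1) U nU, where E = E] contracted by simp
    have "Phi E P (A @ W @ x # C) = Phi E (outer (l + u) t P) (A @ W' @ x # C)"
      using Phi_contract[OF less.prems(1) U ut(2) nU] contracted by simp
    also have "\<dots> = Phi E (outer l (s - t) (outer (l + u) t P))
        (A @ Phi E (inner l (s - t) (outer (l + u) t P)) W' * x # C)"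
      using less.hyps[OF len'(2) P1] splits_outer_inside[OF sp ut(3)] len'(1)
      unfolding l_def W'_def by simp
    also have "\<dots> = Phi E (outer l s P) (A @ Phi E (outer u t (inner l s P)) W' * x # C)"
      using outer_outer_inside[OF part sp n U ut(3)] inner_outer_inside[OF part sp n U ut(3)] by simp
    also have "Phi E (outer u t (inner l s P)) W' = Phi E (inner l s P) W"
      using Phi_contract[of W "inner l s P" u t] inner_nc ut W W1 V contract_append[OF W1 V]
      unfolding W'_def s_def by simp
    finally show ?thesis unfolding l_def s_def .
  qed
qed

lemma sum_in_B: "(\<And>i. i \<in> I \<Longrightarrow> f i \<in> Bs) \<Longrightarrow> (\<Sum>i\<in>I. f i) \<in> Bs"
  by (induction I rule: infinite_finite_induct) (use of_int_in_B[of 0] B_add in auto)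

lemma kappa_in_B: "xs \<noteq> [] \<Longrightarrow> kappa E \<chi> P xs \<in> Bs"
  unfolding kappa_def by (rule sum_in_B) (use B_mult of_int_in_B Phi_in_B INC_iff in auto)

lemma kappa_zero_slot: "kappa E \<chi> P (A @ 0 * x # C) = 0"
  unfolding kappa_def
  using additive.zero[OF additive_Phi_slot[of A x C]] INC_iff by (auto intro!: sum.neutral)

lemma Phi_slot_linear_combination:
  assumes "noncrossing (length (A @ x # C)) R"
  shows "Phi E R (A @ (\<Sum>T\<in>D. of_int (m T) * f T) * x # C)
    = (\<Sum>T\<in>D. of_int (m T) * Phi E R (A @ f T * x # C))"
proof -
  have L: "additive (\<lambda>b. Phi E R (A @ b * x # C))" using additive_Phi_slot assms by simp
  have "Phi E R (A @ (\<Sum>T\<in>D. of_int (m T) * f T) * x # C)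
      = (\<Sum>T\<in>D. Phi E R (A @ (of_int (m T) * f T) * x # C))"
    by (rule additive.sum[OF L])
  also have "\<dots> = (\<Sum>T\<in>D. of_int (m T) * Phi E R (A @ f T * x # C))"
    using additive_of_int_mult[OF L] by simp
  finally show ?thesis .
qed

lemma kappa_contract_block:
  assumes "INC_interval_block (length (A @ W @ x # C)) (length A) (length W) \<chi> PP"
  shows "kappa E \<chi> PP (A @ W @ x # C) =
    kappa E (\<lambda>j. \<chi> (shift_up (length A) (length W) j)) (outer (length A) (length W) PP)
      (A @ kappa E (\<lambda>j. \<chi> (j + length A)) (one_part (length W)) W * x # C)"
proof -
  define n l s where "n = length (A @ W @ x # C)" and "l = length A" and "s = length W"
  interpret INC_interval_block n l s \<chi> PP using assms unfolding n_def l_def s_def .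
  define D1 where "D1 = {z\<in>INC s \<chi>_in. refines z (one_part s)}"
  define D2 where "D2 = {z\<in>INC (n - s) \<chi>_out. refines z (outer l s PP)}"
  define m1 where "m1 T = mu_INC s \<chi>_in T (one_part s)" for T
  define m2 where "m2 R = mu_INC (n - s) \<chi>_out R (outer l s PP)" for R
  define F where "F T R = of_int (m1 T * m2 R) * Phi E R (A @ Phi E T W * x # C)" for T R
  have fin: "finite D1" "finite D2"
    unfolding D1_def D2_def using finite_poset_finite[OF finite_poset_INC] by simp_all
  have len: "length (A @ y # C) = n - s" for y unfolding n_def s_def by simp
  have "kappa E \<chi> PP (A @ W @ x # C)
      = (\<Sum>z\<in>{z\<in>INC n \<chi>. refines z PP}. of_int (mu_INC n \<chi> z PP) * Phi E z (A @ W @ x # C))"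
    unfolding kappa_def n_def ..
  also have "\<dots> = (\<Sum>z\<in>{z\<in>INC n \<chi>. refines z PP}. F (inner l s z) (outer l s z))"
  proof (rule sum.cong[OF refl])
    fix z assume "z \<in> {z\<in>INC n \<chi>. refines z PP}"
    then have z: "z \<in> INC n \<chi>" "refines z PP" by auto
    have "Phi E z (A @ W @ x # C) = Phi E (outer l s z) (A @ Phi E (inner l s z) W * x # C)"
      using Phi_decompose[of A W x C z] z(1) below_PP(2)[OF z] s unfolding INC_iff n_def l_def s_def
      by (auto simp: Suc_le_eq)
    then show "of_int (mu_INC n \<chi> z PP) * Phi E z (A @ W @ x # C) = F (inner l s z) (outer l s z)"
      unfolding F_def m1_def m2_def using mu_INC_factor[OF z] unfolding n_def l_def s_def by simp
  qed
  also have "\<dots> = (\<Sum>w\<in>D1 \<times> D2. F (fst w) (snd w))"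
    using sum.reindex_bij_betw[OF bij_betw_inner_outer, of "\<lambda>w. F (fst w) (snd w)"]
    unfolding D1_def D2_def n_def l_def s_def by simp
  also have "\<dots> = (\<Sum>T\<in>D1. \<Sum>R\<in>D2. F T R)"
    by (simp add: sum.cartesian_product')
  also have "\<dots> = (\<Sum>R\<in>D2. \<Sum>T\<in>D1. F T R)"
    by (rule sum.swap)
  also have "\<dots> = (\<Sum>R\<in>D2. of_int (m2 R) * Phi E R (A @ (\<Sum>T\<in>D1. of_int (m1 T) * Phi E T W) * x # C))"
  proof (rule sum.cong[OF refl])
    fix R assume "R \<in> D2"
    then have "noncrossing (length (A @ x # C)) R" using len INC_iff unfolding D2_def by auto
    moreover have "F T R = of_int (m2 R) * (of_int (m1 T) * Phi E R (A @ Phi E T W * x # C))" for T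
      unfolding F_def by (simp only: mult.commute[of "m1 T"] of_int_mult mult.assoc)
    ultimately show "(\<Sum>T\<in>D1. F T R)
        = of_int (m2 R) * Phi E R (A @ (\<Sum>T\<in>D1. of_int (m1 T) * Phi E T W) * x # C)"
      by (simp add: Phi_slot_linear_combination sum_distrib_left)
  qed
  also have "\<dots> = kappa E \<chi>_out (outer l s PP) (A @ kappa E \<chi>_in (one_part s) W * x # C)"
    unfolding kappa_def len D1_def D2_def m1_def m2_def s_def ..
  finally show ?thesis unfolding n_def l_def s_def .
qed

end

section \<open>Faces and mixed blocks\<close>

definition in_faces :: "('i \<Rightarrow> side \<Rightarrow> 'a set) \<Rightarrow> (nat \<Rightarrow> 'i) \<Rightarrow> (nat \<Rightarrow> side) \<Rightarrow> 'a list \<Rightarrow> bool" where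
  "in_faces AA \<omega> \<chi> xs \<longleftrightarrow> (\<forall>k\<in>{1..length xs}. xs ! (k - 1) \<in> AA (\<omega> k) (\<chi> k))"

lemma in_faces_block:
  assumes "in_faces AA \<omega> \<chi> (A @ W @ x # C)"
  shows "in_faces AA (\<lambda>j. \<omega> (j + length A)) (\<lambda>j. \<chi> (j + length A)) W"
  unfolding in_faces_def
proof
  fix k assume k: "k \<in> {1..length W}"
  then have "(A @ W @ x # C) ! (k + length A - 1) = W ! (k - 1)" by (auto simp: nth_append)
  moreover have "k + length A \<in> {1..length (A @ W @ x # C)}" using k by auto
  ultimately show "W ! (k - 1) \<in> AA (\<omega> (k + length A)) (\<chi> (k + length A))"
    using assms unfolding in_faces_def by metis
qed

lemma in_faces_contract:
  assumes xs: "in_faces AA \<omega> \<chi> (A @ W @ x # C)" and bx: "\<And>i sd. x \<in> AA i sd \<Longrightarrow> b * x \<in> AA i sd"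
  shows "in_faces AA (\<lambda>j. \<omega> (shift_up (length A) (length W) j)) (\<lambda>j. \<chi> (shift_up (length A) (length W) j))
    (A @ b * x # C)"
  unfolding in_faces_def
proof
  fix k assume k: "k \<in> {1..length (A @ b * x # C)}"
  define k' where "k' = shift_up (length A) (length W) k"
  have k': "k' \<in> {1..length (A @ W @ x # C)}" using k unfolding k'_def shift_up_def by auto
  have orig: "(A @ W @ x # C) ! (k' - 1) \<in> AA (\<omega> k') (\<chi> k')"
    using xs k' unfolding in_faces_def by blast
  consider "k \<le> length A" | "k = length A + 1" | "length A + 1 < k" by linarith
  then show "(A @ b * x # C) ! (k - 1) \<in> AA (\<omega> k') (\<chi> k')"
  proof cases
    case 1
    then show ?thesis using orig k unfolding k'_def shift_up_def by (auto simp: nth_append)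
  next
    case 2
    then show ?thesis using orig bx unfolding k'_def shift_up_def by (simp add: nth_append)
  next
    case 3
    then have "(A @ W @ x # C) ! (k' - 1) = (A @ b * x # C) ! (k - 1)"
      unfolding k'_def shift_up_def by (auto simp: nth_append nth_Cons')
    then show ?thesis using orig by simp
  qed
qed

definition mixed_block :: "(nat \<Rightarrow> 'i) \<Rightarrow> nat set \<Rightarrow> bool" where
  "mixed_block \<omega> V \<longleftrightarrow> (\<exists>j\<in>V. \<exists>k\<in>V. \<omega> j \<noteq> \<omega> k)"

lemma mixed_block_interval:
  assumes "mixed_block \<omega> {l+1..l+s}"
  shows "mixed_block (\<lambda>j. \<omega> (j + l)) {1..s}"
proof -
  obtain j k where "j \<in> {l+1..l+s}" "k \<in> {l+1..l+s}" "\<omega> j \<noteq> \<omega> k"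
    using assms unfolding mixed_block_def by blast
  then show ?thesis
    unfolding mixed_block_def by (intro bexI[of _ "j - l"] bexI[of _ "k - l"]) auto
qed

lemma mixed_block_shift_down:
  assumes VW: "V \<inter> {l+1..l+s} = {}" and "mixed_block \<omega> V"
  shows "mixed_block (\<lambda>j. \<omega> (shift_up l s j)) (shift_down l s ` V)"
proof -
  obtain j k where jk: "j \<in> V" "k \<in> V" "\<omega> j \<noteq> \<omega> k" using assms(2) unfolding mixed_block_def by blast
  then have "shift_up l s (shift_down l s j) = j" "shift_up l s (shift_down l s k) = k"
    using VW shift_up_shift_down by blast+
  then show ?thesis
    unfolding mixed_block_def using jk by (intro bexI[of _ "shift_down l s j"] bexI[of _ "shift_down l s k"]) auto
qed

lemma comb_free_boolean_indepD:
  "comb_free_boolean_indep E AA \<Longrightarrow> mixed_block \<omega> {1..length xs} \<Longrightarrow> in_faces AA \<omega> \<chi> xs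
   \<Longrightarrow> kappa E \<chi> (one_part (length xs)) xs = 0"
  unfolding comb_free_boolean_indep_def mixed_block_def in_faces_def by blast

context B_expectation
begin

lemma kappa_vanishes_if_mixed_block:
  assumes faces: "\<And>i sd b x. b \<in> Bs \<Longrightarrow> x \<in> AA i sd \<Longrightarrow> b * x \<in> AA i sd"
    and indep: "comb_free_boolean_indep E AA"
  shows "P \<in> INC (length xs) \<chi> \<Longrightarrow> in_faces AA \<omega> \<chi> xs \<Longrightarrow> \<exists>V\<in>P. mixed_block \<omega> V
    \<Longrightarrow> kappa E \<chi> P xs = 0"
proof (induction "length xs" arbitrary: xs \<chi> \<omega> P rule: less_induct)
  case less
  have part: "partition_on {1..length xs} P" using INC_partition_on[OF less.prems(1)] .
  obtain V where V: "V \<in> P" "mixed_block \<omega> V" using less.prems(3) by blast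
  show ?case
  proof (cases "P = one_part (length xs)")
    case True
    then have mixed: "mixed_block \<omega> {1..length xs}" using V unfolding one_part_def by simp
    show ?thesis using comb_free_boolean_indepD[OF indep mixed less.prems(2)] True by simp
  next
    case False
    have "xs \<noteq> []" using V partition_on_block_subset[OF part V(1)] unfolding mixed_block_def by auto
    then obtain l s where blk: "{l+1..l+s} \<in> P" "1 \<le> s" "l + s < length xs"
      using noncrossing_interval_block[OF _ False] less.prems(1) unfolding INC_iff by (cases xs) auto
    then obtain A Ws x C where xs: "xs = A @ Ws @ x # C" and A: "length A = l" and Ws: "length Ws = s"
      using split_list_at by blast
    interpret INC_interval_block "length xs" l s \<chi> P using less.prems(1) blk by unfold_locales
    define K where "K = kappa E \<chi>_in (one_part s) Ws"
    have factor: "kappa E \<chi> P xs = kappa E \<chi>_out (outer l s P) (A @ K * x # C)"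
      using kappa_contract_block[of A Ws x C \<chi> P] INC_interval_block_axioms
      unfolding K_def xs A Ws by simp
    show ?thesis
    proof (cases "V = {l+1..l+s}")
      case True
      have mixed: "mixed_block (\<lambda>j. \<omega> (j + l)) {1..length Ws}"
        using mixed_block_interval V(2) True Ws by simp
      have "in_faces AA (\<lambda>j. \<omega> (j + l)) \<chi>_in Ws"
        using in_faces_block[OF less.prems(2)[unfolded xs]] A by simp
      then have "K = 0" unfolding K_def using comb_free_boolean_indepD[OF indep mixed] Ws by simp
      then show ?thesis using factor kappa_zero_slot by simp
    next
      case False
      then have VW: "V \<inter> {l+1..l+s} = {}" using partition_on_block_eq[OF part V(1) blk(1)] by blast
      have "Ws \<noteq> []" using blk(2) Ws by auto
      then have "K \<in> Bs" unfolding K_def by (rule kappa_in_B)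
      then have "in_faces AA (\<lambda>j. \<omega> (shift_up l s j)) \<chi>_out (A @ K * x # C)"
        using in_faces_contract[OF less.prems(2)[unfolded xs]] faces A Ws by blast
      moreover have "\<exists>V\<in>outer l s P. mixed_block (\<lambda>j. \<omega> (shift_up l s j)) V"
        using shift_down_block_in_outer[OF V(1) VW] mixed_block_shift_down[OF VW V(2)] by blast
      moreover have "length (A @ K * x # C) = length xs - s" using xs Ws by simp
      ultimately show ?thesis using less.hyps factor outer_PP_INC blk by simp
    qed
  qed
qed

end

lemma B_expectation_if_B_prob_space:
  assumes "B_prob_space sc Bs E"
  shows "B_expectation E Bs"
proof -
  have sc: "sc 1 = 1" "\<And>c d. sc (c + d) = sc c + sc d" and us: "unital_subalgebra sc Bs"
    using assms unfolding B_prob_space_def complex_structure_def by blast+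
  have "sc 0 = 0" using sc(2)[of 0 0] by simp
  then have sc_minus_one: "sc (-1) = -1" using sc(1) sc(2)[of "-1" 1] by (simp add: eq_neg_iff_add_eq_0)
  have B: "1 \<in> Bs" "0 \<in> Bs" "\<And>x y. x \<in> Bs \<Longrightarrow> y \<in> Bs \<Longrightarrow> x + y \<in> Bs \<and> x * y \<in> Bs"
    "\<And>c x. x \<in> Bs \<Longrightarrow> sc c * x \<in> Bs"
    using us unfolding unital_subalgebra_def by blast+
  have nat: "of_nat m \<in> Bs" for m by (induction m) (use B in auto)
  have "of_int c \<in> Bs" for c
  proof (cases c rule: int_cases)
    case (neg m)
    then have "of_int c = sc (-1) * of_nat (Suc m)" using sc_minus_one by simp
    then show ?thesis using B(4)[OF nat[of "Suc m"], of "-1"] by metis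
  qed (use nat in simp)
  moreover have "E (b * x) = b * E x" if "b \<in> Bs" for b x
    using assms B(1) that unfolding B_prob_space_def by (metis mult.right_neutral)
  ultimately show ?thesis
    using assms B(3) unfolding B_prob_space_def by unfold_locales blast+
qed

theorem proposition4p5:
  fixes sc :: "complex \<Rightarrow> 'a::ring_1"
    and Bs :: "'a set"
    and E :: "'a \<Rightarrow> 'a"
    and AA :: "'i \<Rightarrow> side \<Rightarrow> 'a set"
    and xs :: "'a list"
    and \<chi> :: "nat \<Rightarrow> side"
    and \<omega> :: "nat \<Rightarrow> 'i"
    and \<pi> :: "nat set set"
  assumes "B_prob_space sc Bs E"
    and "\<forall>i s. B_face sc Bs (AA i s)"
    and "comb_free_boolean_indep E AA"
    and "\<pi> \<in> INC (length xs) \<chi>"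
    and "\<forall>k\<in>{1..length xs}. xs ! (k - 1) \<in> AA (\<omega> k) (\<chi> k)"
    and "\<exists>V\<in>\<pi>. \<exists>j\<in>V. \<exists>k\<in>V. \<omega> j \<noteq> \<omega> k"
  shows "kappa E \<chi> \<pi> xs = 0"
proof -
  interpret B_expectation E Bs using B_expectation_if_B_prob_space[OF assms(1)] .
  have "\<And>i sd b x. b \<in> Bs \<Longrightarrow> x \<in> AA i sd \<Longrightarrow> b * x \<in> AA i sd"
    using assms(2) unfolding B_face_def by blast
  then show ?thesis
    using kappa_vanishes_if_mixed_block[OF _ assms(3,4)] assms(5,6)
    unfolding in_faces_def mixed_block_def by blast
qed

end
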